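(* Let $\varphi:\mathbb{R}\to\mathbb{R}$ be smooth and let $\Sigma$ be a $\varphi$-stochastically complete $[\varphi,\vec e_3]$-minimal surface in $\mathbb{R}^3$ contained in the half-space $\mathcal{H}_{\vec v}=\{x\in\mathbb{R}^3:\langle x,\vec v\rangle\le 0\}$ for some nonzero vector $\vec v$ with $\langle\vec v,\vec e_3\rangle=0$. Then one of the following holds: (1) $\Sigma$ is a plane parallel to $\partial\mathcal{H}_{\vec v}$; (2) $\Sigma$ is not such a plane, and there exists a divergent sequence $\{p_n\}\subset\Sigma$ with $\eta(p_n)\to 0$ as $n\to\infty$.
   Context: Surfaces are connected, orientable, immersed in $\mathbb{R}^3$, without boundary, with unit normal $N$; $\{\vec e_1,\vec e_2,\vec e_3\}$ is the standard basis. For a surface $\Sigma$, $\mu(p)=\langle p,\vec e_3\rangle$ is the height function and $\eta=\langle N,\vec e_3\rangle$ the angle function. Given a smooth $\varphi$, $\Sigma$ is called $[\varphi,\vec e_3]$-minimal if its mean curvature vector $\vec H$ (trace of the second fundamental form) satisfies $\vec H=\dot\varphi(\mu)\,\eta\,N$; equivalently $H=-\dot\varphi(\mu)\eta$ with $\vec H=-HN$. On $\Sigma$ write $\varphi$ for $\varphi\circ\mu$ and let $\Delta^{\varphi}u=\Delta u+\langle\nabla\varphi,\nabla u\rangle$ (induced metric). $\Sigma$ is $\varphi$-stochastically complete if for every $u\in C^2(\Sigma)$ with $u^*=\sup_\Sigma u<+\infty$ there is a sequence $p_n\in\Sigma$ with $u(p_n)>u^*-1/n$ and $\Delta^{\varphi}u(p_n)<1/n$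 for all $n$. A sequence is divergent if it eventually leaves every compact subset of $\Sigma$. *)

theory Defs
  imports "HOL-Analysis.Analysis"
begin

definition pd1 :: "(real \<times> real \<Rightarrow> 'b::real_normed_vector) \<Rightarrow> real \<times> real \<Rightarrow> 'b" where
  "pd1 f p = vector_derivative (\<lambda>t. f (fst p + t, snd p)) (at 0)"

definition pd2 :: "(real \<times> real \<Rightarrow> 'b::real_normed_vector) \<Rightarrow> real \<times> real \<Rightarrow> 'b" where
  "pd2 f p = vector_derivative (\<lambda>t. f (fst p, snd p + t)) (at 0)"

fun Ck_on :: "nat \<Rightarrow> (real \<times> real) set \<Rightarrow> (real \<times> real \<Rightarrow> 'b::real_normed_vector) \<Rightarrow> bool" where
  "Ck_on 0 S f = continuous_on S f"
| "Ck_on (Suc k) S f =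
     (continuous_on S f \<and>
      (\<forall>p\<in>S. (\<lambda>t. f (fst p + t, snd p)) differentiable (at 0)
            \<and> (\<lambda>t. f (fst p, snd p + t)) differentiable (at 0))
      \<and> Ck_on k S (pd1 f) \<and> Ck_on k S (pd2 f))"

definition smooth2_on :: "(real \<times> real) set \<Rightarrow> (real \<times> real \<Rightarrow> 'b::real_normed_vector) \<Rightarrow> bool" where
  "smooth2_on S f \<longleftrightarrow> (\<forall>k. Ck_on k S f)"

definition smooth_real :: "(real \<Rightarrow> real) \<Rightarrow> bool" where
  "smooth_real \<phi> \<longleftrightarrow> (\<forall>k x. ((deriv ^^ k) \<phi>) differentiable (at x))"

text \<open>The surface is the type 'm (with its topology); a smooth atlas is given by local
  parametrisations (V, x): V open in R^2, x a homeomorphism of V onto an open subset of 'm;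
  the parametrised sets cover 'm and transition maps are C^\<infinity>. No boundary: charts are open.\<close>

definition surface_atlas :: "((real \<times> real) set \<times> (real \<times> real \<Rightarrow> 'm::topological_space)) set \<Rightarrow> bool" where
  "surface_atlas A \<longleftrightarrow>
     (\<forall>(V, x)\<in>A. open V \<and> open (x ` V) \<and> continuous_on V x \<and> inj_on x V
                  \<and> continuous_on (x ` V) (inv_into V x))
   \<and> (\<Union>(V, x)\<in>A. x ` V) = UNIV
   \<and> (\<forall>(V, x)\<in>A. \<forall>(W, y)\<in>A.
        smooth2_on (V \<inter> x -` (y ` W)) (\<lambda>q. inv_into W y (x q)))"

definition immersion :: "((real \<times> real) set \<times> (real \<times> real \<Rightarrow> 'm)) set \<Rightarrow> ('m \<Rightarrow> real^3) \<Rightarrow> bool" where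
  "immersion A F \<longleftrightarrow>
     (\<forall>(V, x)\<in>A. smooth2_on V (F \<circ> x)
        \<and> (\<forall>q\<in>V. inj (\<lambda>(s, t). s *\<^sub>R pd1 (F \<circ> x) q + t *\<^sub>R pd2 (F \<circ> x) q)))"

text \<open>A (global, continuous) unit normal field along the immersion; its existence is orientability.\<close>
definition unit_normal :: "((real \<times> real) set \<times> (real \<times> real \<Rightarrow> 'm::topological_space)) set \<Rightarrow> ('m \<Rightarrow> real^3) \<Rightarrow> ('m \<Rightarrow> real^3) \<Rightarrow> bool" where
  "unit_normal A F N \<longleftrightarrow> continuous_on UNIV N \<and> (\<forall>p. norm (N p) = 1)
     \<and> (\<forall>(V, x)\<in>A. \<forall>q\<in>V. N (x q) \<bullet> pd1 (F \<circ> x) q = 0 \<and> N (x q) \<bullet> pd2 (F \<circ> x) q = 0)"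

definition e3 :: "real^3" where "e3 = axis 3 1"

definition metric_det :: "(real \<times> real \<Rightarrow> real^3) \<Rightarrow> real \<times> real \<Rightarrow> real" where
  "metric_det X q = (pd1 X q \<bullet> pd1 X q) * (pd2 X q \<bullet> pd2 X q) - (pd1 X q \<bullet> pd2 X q)^2"

text \<open>Mean curvature vector = trace of the (vector-valued) second fundamental form:
  (g^{ij} <X_ij, n>) n.\<close>
definition mean_curv_vec :: "(real \<times> real \<Rightarrow> real^3) \<Rightarrow> real^3 \<Rightarrow> real \<times> real \<Rightarrow> real^3" where
  "mean_curv_vec X n q =
    (let E = pd1 X q \<bullet> pd1 X q; Fm = pd1 X q \<bullet> pd2 X q; G = pd2 X q \<bullet> pd2 X q;
         L = pd1 (pd1 X) q \<bullet> n; M = pd2 (pd1 X) q \<bullet> n; Nn = pd2 (pd2 X) q \<bullet> n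
     in ((G * L - 2 * Fm * M + E * Nn) / (E * G - Fm^2)) *\<^sub>R n)"

text \<open>Tangential gradient (as a vector of R^3) of a local function f: g^{kl} f_k X_l.\<close>
definition tgrad :: "(real \<times> real \<Rightarrow> real^3) \<Rightarrow> (real \<times> real \<Rightarrow> real) \<Rightarrow> real \<times> real \<Rightarrow> real^3" where
  "tgrad X f q =
    (let E = pd1 X q \<bullet> pd1 X q; Fm = pd1 X q \<bullet> pd2 X q; G = pd2 X q \<bullet> pd2 X q;
         D = E * G - Fm^2
     in ((G * pd1 f q - Fm * pd2 f q) / D) *\<^sub>R pd1 X q
        + ((E * pd2 f q - Fm * pd1 f q) / D) *\<^sub>R pd2 X q)"

text \<open>Laplace--Beltrami operator: g^{ij} (f_ij - \<Gamma>^k_ij f_k), with \<Gamma>^k_ij f_k = <X_ij, grad f>.\<close>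
definition lap_local :: "(real \<times> real \<Rightarrow> real^3) \<Rightarrow> (real \<times> real \<Rightarrow> real) \<Rightarrow> real \<times> real \<Rightarrow> real" where
  "lap_local X f q =
    (let E = pd1 X q \<bullet> pd1 X q; Fm = pd1 X q \<bullet> pd2 X q; G = pd2 X q \<bullet> pd2 X q;
         D = E * G - Fm^2; gr = tgrad X f q
     in (G * (pd1 (pd1 f) q - pd1 (pd1 X) q \<bullet> gr)
         - 2 * Fm * (pd2 (pd1 f) q - pd2 (pd1 X) q \<bullet> gr)
         + E * (pd2 (pd2 f) q - pd2 (pd2 X) q \<bullet> gr)) / D)"

text \<open>\<Delta>^\<phi> u = \<Delta> u + <\<nabla>(\<phi>\<circ>\<mu>), \<nabla> u>, computed in the chart x at q.\<close>
definition lap_phi_local :: "(real \<Rightarrow> real) \<Rightarrow> ('m \<Rightarrow> real^3) \<Rightarrow> (real \<times> real \<Rightarrow> 'm) \<Rightarrow> ('m \<Rightarrow> real) \<Rightarrow> real \<times> real \<Rightarrow> real" where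
  "lap_phi_local \<phi> F x u q =
     lap_local (F \<circ> x) (u \<circ> x) q
     + tgrad (F \<circ> x) (\<lambda>r. \<phi> (F (x r) \<bullet> e3)) q \<bullet> tgrad (F \<circ> x) (u \<circ> x) q"

text \<open>[\<phi>, e3]-minimal: mean curvature vector = \<phi>'(\<mu>) \<eta> N.\<close>
definition phi_e3_minimal :: "((real \<times> real) set \<times> (real \<times> real \<Rightarrow> 'm)) set \<Rightarrow> ('m \<Rightarrow> real^3) \<Rightarrow> ('m \<Rightarrow> real^3) \<Rightarrow> (real \<Rightarrow> real) \<Rightarrow> bool" where
  "phi_e3_minimal A F N \<phi> \<longleftrightarrow>
     (\<forall>(V, x)\<in>A. \<forall>q\<in>V.
        mean_curv_vec (F \<circ> x) (N (x q)) q
          = (deriv \<phi> (F (x q) \<bullet> e3) * (N (x q) \<bullet> e3)) *\<^sub>R N (x q))"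

definition C2_surf :: "((real \<times> real) set \<times> (real \<times> real \<Rightarrow> 'm)) set \<Rightarrow> ('m \<Rightarrow> real) \<Rightarrow> bool" where
  "C2_surf A u \<longleftrightarrow> (\<forall>(V, x)\<in>A. Ck_on 2 V (u \<circ> x))"

definition phi_stoch_complete :: "((real \<times> real) set \<times> (real \<times> real \<Rightarrow> 'm)) set \<Rightarrow> ('m \<Rightarrow> real^3) \<Rightarrow> (real \<Rightarrow> real) \<Rightarrow> bool" where
  "phi_stoch_complete A F \<phi> \<longleftrightarrow>
     (\<forall>u. C2_surf A u \<and> bdd_above (range u) \<longrightarrow>
        (\<exists>p :: nat \<Rightarrow> 'm. \<forall>n. u (p n) > Sup (range u) - 1 / real (Suc n)
            \<and> (\<exists>(V, x)\<in>A. \<exists>q\<in>V. x q = p n \<and> lap_phi_local \<phi> F x u q < 1 / real (Suc n))))"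

definition divergent_seq :: "(nat \<Rightarrow> 'm::topological_space) \<Rightarrow> bool" where
  "divergent_seq p \<longleftrightarrow> (\<forall>K. compact K \<longrightarrow> (\<forall>\<^sub>F n in sequentially. p n \<notin> K))"

end

(*
  Write u = <F, v> for the height in the horizontal direction v.  Since v is orthogonal to e3,
  the [phi, e3]-minimal equation makes u harmonic for the drift Laplacian, and
  Delta^phi exp u = exp u * (|v|^2 - <v, N>^2) >= exp u * eta^2 * |v|^2.

  If u attains its maximum, the strong maximum principle for Delta^phi (proved in charts with Hopf's
  barrier exp (-alpha |z - y|^2)) makes u constant.  Then N is parallel to v, so eta vanishes, and
  arctan <F, e3 x v> has no maximum, so its maximizing sequences diverge.

  Otherwise phi-stochastic completeness, applied to exp u, gives points where exp u is almost
  maximal and Delta^phi exp u < 1/n.  They diverge because u has no maximum, and by the inequality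
  above eta tends to 0 along them.  So the divergent sequence of the second alternative exists in
  every case, whether or not the surface is a plane.
*)

theory Submission
  imports Defs "HOL-Analysis.Cross3"
begin

section \<open>Partial derivatives in the plane\<close>

definition has_dir_deriv :: "(real \<times> real \<Rightarrow> 'b::real_normed_vector) \<Rightarrow> real \<times> real \<Rightarrow> real \<times> real \<Rightarrow> 'b \<Rightarrow> bool"
  where "has_dir_deriv f e p d \<longleftrightarrow> ((\<lambda>t. f (p + t *\<^sub>R e)) has_vector_derivative d) (at 0)"

lemma has_vector_derivative_at_iff_shift:
  fixes g :: "real \<Rightarrow> 'b::real_normed_vector"
  shows "((\<lambda>t. g (s + t)) has_vector_derivative d) (at 0) \<longleftrightarrow> (g has_vector_derivative d) (at s)"
proof
  assume "((\<lambda>t. g (s + t)) has_vector_derivative d) (at 0)"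
  moreover have "((\<lambda>r. r - s) has_vector_derivative 1) (at s)"
    by (auto intro!: derivative_eq_intros simp: has_real_derivative_iff_has_vector_derivative[symmetric])
  ultimately have "(((\<lambda>t. g (s + t)) \<circ> (\<lambda>r. r - s)) has_vector_derivative (1 *\<^sub>R d)) (at s)"
    by (intro vector_diff_chain_at) simp_all
  then show "(g has_vector_derivative d) (at s)" by (simp add: o_def)
next
  assume "(g has_vector_derivative d) (at s)"
  moreover have "((\<lambda>t. s + t) has_vector_derivative 1) (at 0)"
    by (auto intro!: derivative_eq_intros simp: has_real_derivative_iff_has_vector_derivative[symmetric])
  ultimately have "((g \<circ> (\<lambda>t. s + t)) has_vector_derivative (1 *\<^sub>R d)) (at 0)"
    by (intro vector_diff_chain_at) simp_all
  then show "((\<lambda>t. g (s + t)) has_vector_derivative d) (at 0)" by (simp add: o_def)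
qed

lemma has_dir_deriv_iff_line:
  "has_dir_deriv f e (p + s *\<^sub>R e) d \<longleftrightarrow> ((\<lambda>t. f (p + t *\<^sub>R e)) has_vector_derivative d) (at s)"
  unfolding has_dir_deriv_def has_vector_derivative_at_iff_shift[symmetric, where g="\<lambda>t. f (p + t *\<^sub>R e)"]
  by (simp add: scaleR_add_left add.assoc)

lemma has_dir_deriv_coord_iff:
  "has_dir_deriv f (1, 0) p d \<longleftrightarrow> ((\<lambda>s. f (s, snd p)) has_vector_derivative d) (at (fst p))"
  "has_dir_deriv f (0, 1) p d \<longleftrightarrow> ((\<lambda>s. f (fst p, s)) has_vector_derivative d) (at (snd p))"
  using has_dir_deriv_iff_line[of f "(1, 0)" "(0, snd p)" "fst p" d]
    has_dir_deriv_iff_line[of f "(0, 1)" "(fst p, 0)" "snd p" d]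
  by (cases p; simp)+

lemma line1_eq: "(\<lambda>t. f (fst p + t, snd p)) = (\<lambda>t. f (p + t *\<^sub>R (1, 0)))"
  by (cases p) simp

lemma line2_eq: "(\<lambda>t. f (fst p, snd p + t)) = (\<lambda>t. f (p + t *\<^sub>R (0, 1)))"
  by (cases p) simp

lemma has_dir_deriv_imp_pd1: "has_dir_deriv f (1, 0) p d \<Longrightarrow> pd1 f p = d"
  unfolding pd1_def line1_eq has_dir_deriv_def by (rule vector_derivative_at)

lemma has_dir_deriv_imp_pd2: "has_dir_deriv f (0, 1) p d \<Longrightarrow> pd2 f p = d"
  unfolding pd2_def line2_eq has_dir_deriv_def by (rule vector_derivative_at)

lemma differentiable_iff_has_dir_deriv_pd1:
  "(\<lambda>t. f (fst p + t, snd p)) differentiable (at 0) \<longleftrightarrow> has_dir_deriv f (1, 0) p (pd1 f p)"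
  unfolding pd1_def line1_eq has_dir_deriv_def
  by (metis differentiableI_vector vector_derivative_works)

lemma differentiable_iff_has_dir_deriv_pd2:
  "(\<lambda>t. f (fst p, snd p + t)) differentiable (at 0) \<longleftrightarrow> has_dir_deriv f (0, 1) p (pd2 f p)"
  unfolding pd2_def line2_eq has_dir_deriv_def
  by (metis differentiableI_vector vector_derivative_works)

lemma has_dir_deriv_imp_differentiable:
  "has_dir_deriv f (1, 0) p d \<Longrightarrow> (\<lambda>t. f (fst p + t, snd p)) differentiable (at 0)"
  "has_dir_deriv f (0, 1) p d \<Longrightarrow> (\<lambda>t. f (fst p, snd p + t)) differentiable (at 0)"
  unfolding line1_eq line2_eq has_dir_deriv_def by (blast intro: differentiableI_vector)+

lemma has_dir_deriv_add:
  "has_dir_deriv f e p d \<Longrightarrow> has_dir_deriv g e p d' \<Longrightarrow> has_dir_deriv (\<lambda>z. f z + g z) e p (d + d')"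
  unfolding has_dir_deriv_def by (rule has_vector_derivative_add)

lemma has_dir_deriv_const: "has_dir_deriv (\<lambda>z. c) e p 0"
  unfolding has_dir_deriv_def by (rule has_vector_derivative_const)

lemma has_dir_deriv_fst: "has_dir_deriv fst e p (fst e)"
  unfolding has_dir_deriv_def
  by (auto intro!: derivative_eq_intros simp: has_real_derivative_iff_has_vector_derivative[symmetric])

lemma has_dir_deriv_snd: "has_dir_deriv snd e p (snd e)"
  unfolding has_dir_deriv_def
  by (auto intro!: derivative_eq_intros simp: has_real_derivative_iff_has_vector_derivative[symmetric])

lemma has_dir_deriv_mult:
  fixes f g :: "real \<times> real \<Rightarrow> real"
  shows "has_dir_deriv f e p d \<Longrightarrow> has_dir_deriv g e p d' \<Longrightarrow> has_dir_deriv (\<lambda>z. f z * g z) e p (d * g p + f p * d')"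
  unfolding has_dir_deriv_def has_real_derivative_iff_has_vector_derivative[symmetric]
  by (drule (1) DERIV_mult) (simp add: algebra_simps)

lemma has_dir_deriv_chain:
  fixes f :: "real \<times> real \<Rightarrow> real"
  shows "(\<phi> has_real_derivative \<phi>') (at (f p)) \<Longrightarrow> has_dir_deriv f e p d \<Longrightarrow> has_dir_deriv (\<lambda>z. \<phi> (f z)) e p (\<phi>' * d)"
  unfolding has_dir_deriv_def has_real_derivative_iff_has_vector_derivative[symmetric]
  using DERIV_chain2[of \<phi> \<phi>' "\<lambda>t. f (p + t *\<^sub>R e)" 0 d] by simp

lemma has_dir_deriv_inner: "has_dir_deriv X e p d \<Longrightarrow> has_dir_deriv (\<lambda>z. X z \<bullet> a) e p (d \<bullet> a)"
  unfolding has_dir_deriv_def has_vector_derivative_def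
  by (drule has_derivative_inner_left[where b=a]) simp

lemma has_dir_deriv_transform_open:
  assumes "open S" "p \<in> S" "\<And>z. z \<in> S \<Longrightarrow> f z = g z" "has_dir_deriv f e p d"
  shows "has_dir_deriv g e p d"
proof -
  have "open ((\<lambda>t. p + t *\<^sub>R e) -` S)"
    by (rule open_vimage[OF assms(1)]) (intro continuous_intros)
  then show ?thesis
    using assms(2-4) unfolding has_dir_deriv_def
    by (auto intro: has_vector_derivative_transform_within_open)
qed

lemma pd_cong:
  assumes "open S" "p \<in> S" "\<And>z. z \<in> S \<Longrightarrow> f z = g z"
  shows "pd1 f p = pd1 g p" "pd2 f p = pd2 g p"
proof -
  have "(\<lambda>d. has_dir_deriv f e p d) = (\<lambda>d. has_dir_deriv g e p d)" for e
    using has_dir_deriv_transform_open[OF assms(1,2)] assms(3) by (metis)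
  then show "pd1 f p = pd1 g p" "pd2 f p = pd2 g p"
    unfolding pd1_def pd2_def line1_eq line2_eq vector_derivative_def has_dir_deriv_def
    by (metis (no_types))+
qed

lemma Ck_on_imp_continuous_on: "Ck_on k S f \<Longrightarrow> continuous_on S f"
  by (cases k) auto

lemma Ck_on_Suc_has_dir_deriv:
  assumes "Ck_on (Suc k) S f" "p \<in> S"
  shows "has_dir_deriv f (1, 0) p (pd1 f p)" "has_dir_deriv f (0, 1) p (pd2 f p)"
  using assms by (simp_all add: differentiable_iff_has_dir_deriv_pd1 differentiable_iff_has_dir_deriv_pd2)

lemma Ck_on_Suc_imp: "Ck_on (Suc k) S f \<Longrightarrow> Ck_on k S f"
proof (induction k arbitrary: f)
  case (Suc k)
  from Suc.prems have "Ck_on (Suc k) S (pd1 f)" "Ck_on (Suc k) S (pd2 f)" by simp_all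
  then have "Ck_on k S (pd1 f)" "Ck_on k S (pd2 f)" using Suc.IH by blast+
  with Suc.prems show ?case by simp
qed simp

lemma Ck_on_subset: "Ck_on k V f \<Longrightarrow> U \<subseteq> V \<Longrightarrow> Ck_on k U f"
  by (induction k arbitrary: f) (use continuous_on_subset in auto)

lemma Ck_on_cong:
  assumes S: "open S" and "\<And>z. z \<in> S \<Longrightarrow> f z = g z" "Ck_on k S f"
  shows "Ck_on k S g"
  using assms(2,3)
proof (induction k arbitrary: f g)
  case 0
  then show ?case using continuous_on_cong by (metis Ck_on.simps(1))
next
  case (Suc k)
  have "continuous_on S g"
    using Suc.prems Ck_on_imp_continuous_on continuous_on_cong by metis
  moreover have "has_dir_deriv g (1, 0) p (pd1 f p)" "has_dir_deriv g (0, 1) p (pd2 f p)" if "p \<in> S" for p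
    using Ck_on_Suc_has_dir_deriv[OF Suc.prems(2) that] has_dir_deriv_transform_open[OF S that] Suc.prems(1)
    by blast+
  then have "\<forall>p\<in>S. (\<lambda>t. g (fst p + t, snd p)) differentiable (at 0)
      \<and> (\<lambda>t. g (fst p, snd p + t)) differentiable (at 0)"
    using has_dir_deriv_imp_differentiable by blast
  moreover have "Ck_on k S (pd1 g)"
    by (rule Suc.IH[of "pd1 f"]) (use pd_cong[OF S _ Suc.prems(1)] Suc.prems(2) in auto)
  moreover have "Ck_on k S (pd2 g)"
    by (rule Suc.IH[of "pd2 f"]) (use pd_cong[OF S _ Suc.prems(1)] Suc.prems(2) in auto)
  ultimately show ?case by simp
qed

lemma Ck_on_SucI:
  assumes S: "open S" and "continuous_on S f"
    and "\<And>p. p \<in> S \<Longrightarrow> has_dir_deriv f (1, 0) p (da p)"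
    and "\<And>p. p \<in> S \<Longrightarrow> has_dir_deriv f (0, 1) p (db p)"
    and "Ck_on k S da" "Ck_on k S db"
  shows "Ck_on (Suc k) S f"
proof -
  have "Ck_on k S (pd1 f)"
    by (rule Ck_on_cong[OF S _ assms(5)]) (use assms(3) has_dir_deriv_imp_pd1 in metis)
  moreover have "Ck_on k S (pd2 f)"
    by (rule Ck_on_cong[OF S _ assms(6)]) (use assms(4) has_dir_deriv_imp_pd2 in metis)
  moreover have "\<forall>p\<in>S. (\<lambda>t. f (fst p + t, snd p)) differentiable (at 0)
      \<and> (\<lambda>t. f (fst p, snd p + t)) differentiable (at 0)"
    using assms(3,4) has_dir_deriv_imp_differentiable by blast
  ultimately show ?thesis using assms(2) by simp
qed

lemma Ck_on_const: "open S \<Longrightarrow> Ck_on k S (\<lambda>z. c)"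
proof (induction k arbitrary: c)
  case (Suc k)
  then show ?case
    by (intro Ck_on_SucI[where da="\<lambda>z. 0" and db="\<lambda>z. 0"] has_dir_deriv_const) simp_all
qed simp

lemma Ck_on_fst:
  assumes "open S" shows "Ck_on k S fst"
proof (cases k)
  case (Suc j)
  show ?thesis unfolding Suc
    by (rule Ck_on_SucI[where da="\<lambda>z. 1" and db="\<lambda>z. 0"])
      (use assms has_dir_deriv_fst[of "(1, 0)"] has_dir_deriv_fst[of "(0, 1)"] Ck_on_const
       in \<open>auto intro: continuous_on_fst\<close>)
qed (simp add: continuous_on_fst)

lemma Ck_on_snd:
  assumes "open S" shows "Ck_on k S snd"
proof (cases k)
  case (Suc j)
  show ?thesis unfolding Suc
    by (rule Ck_on_SucI[where da="\<lambda>z. 0" and db="\<lambda>z. 1"])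
      (use assms has_dir_deriv_snd[of "(1, 0)"] has_dir_deriv_snd[of "(0, 1)"] Ck_on_const
       in \<open>auto intro: continuous_on_snd\<close>)
qed (simp add: continuous_on_snd)

lemma Ck_on_add:
  assumes S: "open S" shows "Ck_on k S f \<Longrightarrow> Ck_on k S g \<Longrightarrow> Ck_on k S (\<lambda>z. f z + g z)"
proof (induction k arbitrary: f g)
  case (Suc k)
  show ?case
  proof (rule Ck_on_SucI[OF S, where da="\<lambda>z. pd1 f z + pd1 g z" and db="\<lambda>z. pd2 f z + pd2 g z"])
    show "continuous_on S (\<lambda>z. f z + g z)"
      using Suc.prems Ck_on_imp_continuous_on by (blast intro: continuous_on_add)
    show "has_dir_deriv (\<lambda>z. f z + g z) (1, 0) p (pd1 f p + pd1 g p)"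
      "has_dir_deriv (\<lambda>z. f z + g z) (0, 1) p (pd2 f p + pd2 g p)" if "p \<in> S" for p
      using Ck_on_Suc_has_dir_deriv[OF Suc.prems(1) that] Ck_on_Suc_has_dir_deriv[OF Suc.prems(2) that]
      by (blast intro: has_dir_deriv_add)+
  qed (use Suc in simp_all)
qed (auto intro: continuous_on_add)

lemma Ck_on_mult:
  fixes f g :: "real \<times> real \<Rightarrow> real"
  assumes S: "open S" shows "Ck_on k S f \<Longrightarrow> Ck_on k S g \<Longrightarrow> Ck_on k S (\<lambda>z. f z * g z)"
proof (induction k arbitrary: f g)
  case (Suc k)
  have f: "Ck_on k S f" and g: "Ck_on k S g" using Suc.prems Ck_on_Suc_imp by blast+
  show ?case
  proof (rule Ck_on_SucI[OF S, where da="\<lambda>z. pd1 f z * g z + f z * pd1 g z"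
        and db="\<lambda>z. pd2 f z * g z + f z * pd2 g z"])
    show "continuous_on S (\<lambda>z. f z * g z)"
      using Suc.prems Ck_on_imp_continuous_on by (blast intro: continuous_on_mult)
    show "has_dir_deriv (\<lambda>z. f z * g z) (1, 0) p (pd1 f p * g p + f p * pd1 g p)"
      "has_dir_deriv (\<lambda>z. f z * g z) (0, 1) p (pd2 f p * g p + f p * pd2 g p)" if "p \<in> S" for p
      using Ck_on_Suc_has_dir_deriv[OF Suc.prems(1) that] Ck_on_Suc_has_dir_deriv[OF Suc.prems(2) that]
      by (blast intro: has_dir_deriv_mult)+
    show "Ck_on k S (\<lambda>z. pd1 f z * g z + f z * pd1 g z)" "Ck_on k S (\<lambda>z. pd2 f z * g z + f z * pd2 g z)"
      using Suc f g by (simp_all add: Ck_on_add[OF S])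
  qed
qed (auto intro: continuous_on_mult)

lemma Ck_on_exp:
  fixes f :: "real \<times> real \<Rightarrow> real"
  assumes S: "open S" shows "Ck_on k S f \<Longrightarrow> Ck_on k S (\<lambda>z. exp (f z))"
proof (induction k arbitrary: f)
  case (Suc k)
  have f: "Ck_on k S f" using Suc.prems Ck_on_Suc_imp by blast
  show ?case
  proof (rule Ck_on_SucI[OF S, where da="\<lambda>z. exp (f z) * pd1 f z" and db="\<lambda>z. exp (f z) * pd2 f z"])
    show "continuous_on S (\<lambda>z. exp (f z))"
      using Suc.prems Ck_on_imp_continuous_on by (blast intro: continuous_on_exp)
    show "has_dir_deriv (\<lambda>z. exp (f z)) (1, 0) p (exp (f p) * pd1 f p)"
      "has_dir_deriv (\<lambda>z. exp (f z)) (0, 1) p (exp (f p) * pd2 f p)" if "p \<in> S" for p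
      using Ck_on_Suc_has_dir_deriv[OF Suc.prems that] by (blast intro: has_dir_deriv_chain DERIV_exp)+
    show "Ck_on k S (\<lambda>z. exp (f z) * pd1 f z)" "Ck_on k S (\<lambda>z. exp (f z) * pd2 f z)"
      using Suc f by (simp_all add: Ck_on_mult[OF S])
  qed
qed (auto intro: continuous_on_exp)

lemma Ck_on_inner:
  assumes S: "open S" shows "Ck_on k S X \<Longrightarrow> Ck_on k S (\<lambda>z. X z \<bullet> a)"
proof (induction k arbitrary: X)
  case (Suc k)
  show ?case
  proof (rule Ck_on_SucI[OF S, where da="\<lambda>z. pd1 X z \<bullet> a" and db="\<lambda>z. pd2 X z \<bullet> a"])
    show "continuous_on S (\<lambda>z. X z \<bullet> a)"
      using Ck_on_imp_continuous_on[OF Suc.prems] by (intro continuous_intros)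
    show "has_dir_deriv (\<lambda>z. X z \<bullet> a) (1, 0) p (pd1 X p \<bullet> a)"
      "has_dir_deriv (\<lambda>z. X z \<bullet> a) (0, 1) p (pd2 X p \<bullet> a)" if "p \<in> S" for p
      using Ck_on_Suc_has_dir_deriv[OF Suc.prems that] by (blast intro: has_dir_deriv_inner)+
  qed (use Suc in simp_all)
qed (simp add: continuous_on_inner continuous_on_const)

lemma has_derivative_if_Ck_on:
  fixes f :: "real \<times> real \<Rightarrow> 'b::real_normed_vector"
  assumes V: "open V" and f: "Ck_on (Suc k) V f" and p: "p \<in> V"
  shows "(f has_derivative (\<lambda>h. fst h *\<^sub>R pd1 f p + snd h *\<^sub>R pd2 f p)) (at p)"
proof -
  obtain A B where AB: "open A" "open B" "p \<in> A \<times> B" "A \<times> B \<subseteq> V"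
    using open_prod_elim[OF V p] by blast
  obtain r where r: "r > 0" "ball (snd p) r \<subseteq> B"
    using AB(2,3) open_contains_ball by (metis mem_Times_iff)
  define Y where "Y = ball (snd p) r"
  have AY: "A \<times> Y \<subseteq> V" "open (A \<times> Y)" "p \<in> A \<times> Y"
    using AB r by (auto simp: Y_def open_Times mem_Times_iff)
  have fx: "((\<lambda>x. f (x, snd p)) has_derivative (\<lambda>t. t *\<^sub>R pd1 f p)) (at (fst p) within A)"
    using Ck_on_Suc_has_dir_deriv(1)[OF f p]
    unfolding has_dir_deriv_coord_iff has_vector_derivative_def by (rule has_derivative_at_withinI)
  have fy: "((\<lambda>y. f (x, y)) has_derivative blinfun_apply (blinfun_scaleR_left (pd2 f (x, y)))) (at y within Y)"
    if "x \<in> A" "y \<in> Y" for x y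
  proof -
    have "(x, y) \<in> V" using that AY by blast
    from Ck_on_Suc_has_dir_deriv(2)[OF f this] show ?thesis
      unfolding has_dir_deriv_coord_iff has_vector_derivative_def blinfun_scaleR_left.rep_eq
      by (simp add: has_derivative_at_withinI)
  qed
  have "continuous (at p within A \<times> Y) (pd2 f)"
    using f p AY(1) by (metis Ck_on.simps(2) Ck_on_imp_continuous_on continuous_on_eq_continuous_within
        continuous_within_subset)
  then have "continuous (at (fst p, snd p) within A \<times> Y) (\<lambda>(x, y). blinfun_scaleR_left (pd2 f (x, y)))"
    by (simp add: case_prod_beta' continuous_intros bounded_linear.continuous[OF bounded_linear_blinfun_scaleR_left])
  from has_derivative_partialsI[OF fx fy this] r(1) have
    "((\<lambda>(x, y). f (x, y)) has_derivative
        (\<lambda>(tx, ty). tx *\<^sub>R pd1 f p + blinfun_apply (blinfun_scaleR_left (pd2 f (fst p, snd p))) ty))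
      (at (fst p, snd p) within A \<times> Y)"
    by (simp add: Y_def)
  then have "(f has_derivative (\<lambda>h. fst h *\<^sub>R pd1 f p + snd h *\<^sub>R pd2 f p)) (at p within A \<times> Y)"
    by (simp add: blinfun_scaleR_left.rep_eq case_prod_beta')
  then show ?thesis using at_within_open[OF AY(3,2)] by simp
qed

lemma has_real_derivative_along_line:
  fixes w :: "real \<times> real \<Rightarrow> real"
  assumes "open V" "Ck_on (Suc k) V w" "z + \<tau> *\<^sub>R d \<in> V"
  shows "((\<lambda>t. w (z + t *\<^sub>R d)) has_real_derivative
           fst d * pd1 w (z + \<tau> *\<^sub>R d) + snd d * pd2 w (z + \<tau> *\<^sub>R d)) (at \<tau>)"
proof -
  have "((\<lambda>t. z + t *\<^sub>R d) has_derivative (\<lambda>h. h *\<^sub>R d)) (at \<tau>)"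
    by (auto intro!: derivative_eq_intros)
  from diff_chain_at[OF this has_derivative_if_Ck_on[OF assms]]
  have "((\<lambda>t. w (z + t *\<^sub>R d)) has_derivative (\<lambda>h. fst (h *\<^sub>R d) *\<^sub>R pd1 w (z + \<tau> *\<^sub>R d)
      + snd (h *\<^sub>R d) *\<^sub>R pd2 w (z + \<tau> *\<^sub>R d))) (at \<tau>)"
    by (simp add: o_def)
  moreover have "(\<lambda>h. fst (h *\<^sub>R d) *\<^sub>R pd1 w (z + \<tau> *\<^sub>R d) + snd (h *\<^sub>R d) *\<^sub>R pd2 w (z + \<tau> *\<^sub>R d))
      = (*) (fst d * pd1 w (z + \<tau> *\<^sub>R d) + snd d * pd2 w (z + \<tau> *\<^sub>R d))"
    by (auto simp: algebra_simps)
  ultimately show ?thesis unfolding has_field_derivative_def by simp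
qed

lemma mvt_along_line:
  fixes f g :: "real \<times> real \<Rightarrow> real"
  assumes "s > 0" "\<And>t. 0 \<le> t \<Longrightarrow> t \<le> s \<Longrightarrow> has_dir_deriv f u (p + t *\<^sub>R u) (g (p + t *\<^sub>R u))"
  obtains a where "0 < a" "a < s" "f (p + s *\<^sub>R u) - f p = s * g (p + a *\<^sub>R u)"
proof -
  have "\<exists>a>0. a < s \<and> f (p + s *\<^sub>R u) - f (p + 0 *\<^sub>R u) = (s - 0) * g (p + a *\<^sub>R u)"
    by (rule MVT2[OF assms(1)])
      (use assms(2) in \<open>simp add: has_dir_deriv_iff_line has_real_derivative_iff_has_vector_derivative\<close>)
  with that show ?thesis by auto
qed

lemma mixed_difference_mvt:
  fixes f g h :: "real \<times> real \<Rightarrow> real"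
  assumes s: "s > 0"
    and g: "\<And>a b. 0 \<le> a \<Longrightarrow> a \<le> s \<Longrightarrow> 0 \<le> b \<Longrightarrow> b \<le> s \<Longrightarrow>
               has_dir_deriv f u (p + a *\<^sub>R u + b *\<^sub>R v) (g (p + a *\<^sub>R u + b *\<^sub>R v))"
    and h: "\<And>a b. 0 \<le> a \<Longrightarrow> a \<le> s \<Longrightarrow> 0 \<le> b \<Longrightarrow> b \<le> s \<Longrightarrow>
               has_dir_deriv g v (p + a *\<^sub>R u + b *\<^sub>R v) (h (p + a *\<^sub>R u + b *\<^sub>R v))"
  obtains a b where "0 \<le> a" "a \<le> s" "0 \<le> b" "b \<le> s"
    "f (p + s *\<^sub>R u + s *\<^sub>R v) - f (p + s *\<^sub>R u) - f (p + s *\<^sub>R v) + f p = s * s * h (p + a *\<^sub>R u + b *\<^sub>R v)"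
proof -
  have "\<exists>a>0. a < s \<and> (f (p + s *\<^sub>R v + s *\<^sub>R u) - f (p + s *\<^sub>R u)) - (f (p + s *\<^sub>R v + 0 *\<^sub>R u) - f (p + 0 *\<^sub>R u))
      = (s - 0) * (g (p + a *\<^sub>R u + s *\<^sub>R v) - g (p + a *\<^sub>R u + 0 *\<^sub>R v))"
  proof (rule MVT2[OF s])
    fix t assume t: "0 \<le> t" "t \<le> s"
    have eq: "p + s *\<^sub>R v + t *\<^sub>R u = p + t *\<^sub>R u + s *\<^sub>R v"
      by (simp add: algebra_simps)
    have "((\<lambda>t. f (p + s *\<^sub>R v + t *\<^sub>R u)) has_real_derivative g (p + t *\<^sub>R u + s *\<^sub>R v)) (at t)"
      using g[OF t order.strict_implies_order[OF s] order_refl]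
        has_dir_deriv_iff_line[of f u "p + s *\<^sub>R v" t, unfolded eq]
      by (simp add: has_real_derivative_iff_has_vector_derivative)
    moreover have "((\<lambda>t. f (p + t *\<^sub>R u)) has_real_derivative g (p + t *\<^sub>R u + 0 *\<^sub>R v)) (at t)"
      using g[OF t order_refl order.strict_implies_order[OF s]] has_dir_deriv_iff_line[of f u p t]
      by (simp add: has_real_derivative_iff_has_vector_derivative)
    ultimately show "((\<lambda>t. f (p + s *\<^sub>R v + t *\<^sub>R u) - f (p + t *\<^sub>R u)) has_real_derivative
        g (p + t *\<^sub>R u + s *\<^sub>R v) - g (p + t *\<^sub>R u + 0 *\<^sub>R v)) (at t)"
      by (rule DERIV_diff)
  qed
  then obtain a where a: "0 < a" "a < s" and
    ea: "f (p + s *\<^sub>R u + s *\<^sub>R v) - f (p + s *\<^sub>R u) - f (p + s *\<^sub>R v) + f p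
      = s * (g (p + a *\<^sub>R u + s *\<^sub>R v) - g (p + a *\<^sub>R u))"
    by (auto simp: add.commute add.left_commute)
  obtain b where "0 < b" "b < s" "g (p + a *\<^sub>R u + s *\<^sub>R v) - g (p + a *\<^sub>R u) = s * h (p + a *\<^sub>R u + b *\<^sub>R v)"
    by (rule mvt_along_line[OF s, of g v "p + a *\<^sub>R u" h]) (use h[of a] a in simp)
  with a ea show ?thesis by (intro that[of a b]) auto
qed

lemma mixed_partials_meet:
  fixes f :: "real \<times> real \<Rightarrow> real"
  assumes f: "Ck_on 2 V f" and s: "s > 0" and cb: "cball p (2 * s) \<subseteq> V"
  obtains \<xi> \<xi>' where "\<xi> \<in> cball p (2 * s)" "\<xi>' \<in> cball p (2 * s)" "pd2 (pd1 f) \<xi> = pd1 (pd2 f) \<xi>'"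
proof -
  have f1: "Ck_on (Suc 1) V f" and f12: "Ck_on (Suc 0) V (pd1 f)" "Ck_on (Suc 0) V (pd2 f)"
    using f by (simp_all add: numeral_2_eq_2)
  have near: "p + a *\<^sub>R u + b *\<^sub>R v \<in> cball p (2 * s)"
    if "0 \<le> a" "a \<le> s" "0 \<le> b" "b \<le> s" "norm u = 1" "norm v = 1" for a b u v
  proof -
    have "dist (p + a *\<^sub>R u + b *\<^sub>R v) p \<le> norm (a *\<^sub>R u) + norm (b *\<^sub>R v)"
      unfolding dist_norm by (simp add: add.assoc norm_triangle_ineq del: norm_scaleR)
    also have "\<dots> \<le> 2 * s" using that by simp
    finally show ?thesis by (simp add: dist_commute)
  qed
  note inV = subsetD[OF cb near]
  have d1: "has_dir_deriv f (1, 0) (p + a *\<^sub>R (1, 0) + b *\<^sub>R (0, 1)) (pd1 f (p + a *\<^sub>R (1, 0) + b *\<^sub>R (0, 1)))"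
    and d12: "has_dir_deriv (pd1 f) (0, 1) (p + a *\<^sub>R (1, 0) + b *\<^sub>R (0, 1))
      (pd2 (pd1 f) (p + a *\<^sub>R (1, 0) + b *\<^sub>R (0, 1)))"
    and d2: "has_dir_deriv f (0, 1) (p + a *\<^sub>R (0, 1) + b *\<^sub>R (1, 0)) (pd2 f (p + a *\<^sub>R (0, 1) + b *\<^sub>R (1, 0)))"
    and d21: "has_dir_deriv (pd2 f) (1, 0) (p + a *\<^sub>R (0, 1) + b *\<^sub>R (1, 0))
      (pd1 (pd2 f) (p + a *\<^sub>R (0, 1) + b *\<^sub>R (1, 0)))"
    if "0 \<le> a" "a \<le> s" "0 \<le> b" "b \<le> s" for a b
    using that by (auto intro!: Ck_on_Suc_has_dir_deriv[OF f1] Ck_on_Suc_has_dir_deriv[OF f12(1)]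
        Ck_on_Suc_has_dir_deriv[OF f12(2)] inV simp del: scaleR_Pair)
  obtain a b where ab: "0 \<le> a" "a \<le> s" "0 \<le> b" "b \<le> s" and
    eA: "f (p + s *\<^sub>R (1, 0) + s *\<^sub>R (0, 1)) - f (p + s *\<^sub>R (1, 0)) - f (p + s *\<^sub>R (0, 1)) + f p
      = s * s * pd2 (pd1 f) (p + a *\<^sub>R (1, 0) + b *\<^sub>R (0, 1))"
    by (rule mixed_difference_mvt[OF s d1 d12])
  obtain a' b' where ab': "0 \<le> a'" "a' \<le> s" "0 \<le> b'" "b' \<le> s" and
    eB: "f (p + s *\<^sub>R (0, 1) + s *\<^sub>R (1, 0)) - f (p + s *\<^sub>R (0, 1)) - f (p + s *\<^sub>R (1, 0)) + f p
      = s * s * pd1 (pd2 f) (p + a' *\<^sub>R (0, 1) + b' *\<^sub>R (1, 0))"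
    by (rule mixed_difference_mvt[OF s d2 d21])
  show ?thesis
  proof (rule that)
    show "p + a *\<^sub>R (1, 0) + b *\<^sub>R (0, 1) \<in> cball p (2 * s)" "p + a' *\<^sub>R (0, 1) + b' *\<^sub>R (1, 0) \<in> cball p (2 * s)"
      using near[OF ab, of "(1, 0)" "(0, 1)"] near[OF ab', of "(0, 1)" "(1, 0)"] by (simp_all del: scaleR_Pair)
    show "pd2 (pd1 f) (p + a *\<^sub>R (1, 0) + b *\<^sub>R (0, 1)) = pd1 (pd2 f) (p + a' *\<^sub>R (0, 1) + b' *\<^sub>R (1, 0))"
      using eA eB s by (simp add: algebra_simps)
  qed
qed

lemma pd_mixed_commute:
  fixes f :: "real \<times> real \<Rightarrow> real"
  assumes V: "open V" and f: "Ck_on 2 V f" and p: "p \<in> V"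
  shows "pd2 (pd1 f) p = pd1 (pd2 f) p"
proof (rule ccontr)
  assume ne: "pd2 (pd1 f) p \<noteq> pd1 (pd2 f) p"
  define \<epsilon> where "\<epsilon> = \<bar>pd2 (pd1 f) p - pd1 (pd2 f) p\<bar> / 2"
  have "\<epsilon> > 0" using ne \<epsilon>_def by simp
  moreover have "continuous_on V (pd2 (pd1 f))" "continuous_on V (pd1 (pd2 f))"
    using f by (simp_all add: numeral_2_eq_2)
  ultimately obtain d1 d2 where d: "d1 > 0" "d2 > 0"
    "\<And>z. z \<in> V \<Longrightarrow> dist z p < d1 \<Longrightarrow> dist (pd2 (pd1 f) z) (pd2 (pd1 f) p) < \<epsilon>"
    "\<And>z. z \<in> V \<Longrightarrow> dist z p < d2 \<Longrightarrow> dist (pd1 (pd2 f) z) (pd1 (pd2 f) p) < \<epsilon>"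
    using p unfolding continuous_on_iff by metis
  obtain r where r: "r > 0" "ball p r \<subseteq> V" using V p open_contains_ball by blast
  define s where "s = min r (min d1 d2) / 3"
  have s: "s > 0" "2 * s < r" "2 * s < d1" "2 * s < d2" using r d s_def by auto
  then have cb: "cball p (2 * s) \<subseteq> V" using r(2) by (auto simp: subset_eq)
  obtain \<xi> \<xi>' where \<xi>: "\<xi> \<in> cball p (2 * s)" "\<xi>' \<in> cball p (2 * s)" "pd2 (pd1 f) \<xi> = pd1 (pd2 f) \<xi>'"
    by (rule mixed_partials_meet[OF f s(1) cb])
  have "\<xi> \<in> V" "\<xi>' \<in> V" "dist \<xi> p < d1" "dist \<xi>' p < d2"
    using \<xi>(1,2) cb s by (auto simp: dist_commute)
  then have "dist (pd2 (pd1 f) \<xi>) (pd2 (pd1 f) p) < \<epsilon>" "dist (pd1 (pd2 f) \<xi>') (pd1 (pd2 f) p) < \<epsilon>"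
    using d(3,4) by blast+
  with \<xi>(3) show False
    unfolding \<epsilon>_def dist_real_def by (auto simp: abs_if split: if_splits)
qed

lemma open_line_nbhd:
  fixes z d :: "'a::real_normed_vector"
  assumes "open V" "z \<in> V"
  obtains \<rho> where "\<rho> > 0" "\<And>\<tau>. \<bar>\<tau>\<bar> < \<rho> \<Longrightarrow> z + \<tau> *\<^sub>R d \<in> V"
proof -
  have "open ((\<lambda>\<tau>. z + \<tau> *\<^sub>R d) -` V)"
    by (rule open_vimage[OF assms(1)]) (intro continuous_intros)
  moreover have "0 \<in> (\<lambda>\<tau>. z + \<tau> *\<^sub>R d) -` V" using assms(2) by simp
  ultimately obtain \<rho> where "\<rho> > 0" "ball 0 \<rho> \<subseteq> (\<lambda>\<tau>. z + \<tau> *\<^sub>R d) -` V"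
    by (rule openE)
  with that show ?thesis by (force simp: dist_real_def)
qed

lemma local_max_imp_dir_deriv_zero:
  fixes w :: "real \<times> real \<Rightarrow> real"
  assumes "open V" "z \<in> V" "\<And>y. y \<in> V \<Longrightarrow> w y \<le> w z" "has_dir_deriv w e z d"
  shows "d = 0"
proof -
  obtain \<rho> where \<rho>: "\<rho> > 0" "\<And>\<tau>. \<bar>\<tau>\<bar> < \<rho> \<Longrightarrow> z + \<tau> *\<^sub>R e \<in> V"
    using open_line_nbhd[OF assms(1,2)] by blast
  from assms(4) have "((\<lambda>t. w (z + t *\<^sub>R e)) has_real_derivative d) (at 0)"
    by (simp add: has_dir_deriv_def has_real_derivative_iff_has_vector_derivative)
  then show ?thesis
    by (rule DERIV_local_max[OF _ \<rho>(1)]) (use \<rho>(2) assms(3) in simp)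
qed

lemma local_max_imp_pd_zero:
  fixes w :: "real \<times> real \<Rightarrow> real"
  assumes "open V" "Ck_on (Suc k) V w" "z \<in> V" "\<And>y. y \<in> V \<Longrightarrow> w y \<le> w z"
  shows "pd1 w z = 0" "pd2 w z = 0"
  using local_max_imp_dir_deriv_zero[where w=w, OF assms(1,3,4)] Ck_on_Suc_has_dir_deriv[OF assms(2,3)]
  by blast+

lemma local_max_imp_hessian_nonpos:
  fixes w :: "real \<times> real \<Rightarrow> real"
  assumes V: "open V" and w: "Ck_on 2 V w" and z: "z \<in> V" and max: "\<And>y. y \<in> V \<Longrightarrow> w y \<le> w z"
  shows "fst d * fst d * pd1 (pd1 w) z + 2 * fst d * snd d * pd2 (pd1 w) z + snd d * snd d * pd2 (pd2 w) z \<le> 0"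
    (is "?Q \<le> 0")
proof (rule ccontr)
  assume "\<not> ?Q \<le> 0"
  then have Q: "?Q > 0" by simp
  have w1: "Ck_on (Suc 1) V w" and w12: "Ck_on (Suc 0) V (pd1 w)" "Ck_on (Suc 0) V (pd2 w)"
    using w by (simp_all add: numeral_2_eq_2)
  define g where "g t = fst d * pd1 w (z + t *\<^sub>R d) + snd d * pd2 w (z + t *\<^sub>R d)" for t
  have "((\<lambda>t. pd1 w (z + t *\<^sub>R d)) has_real_derivative fst d * pd1 (pd1 w) z + snd d * pd2 (pd1 w) z) (at 0)"
    "((\<lambda>t. pd2 w (z + t *\<^sub>R d)) has_real_derivative fst d * pd1 (pd2 w) z + snd d * pd2 (pd2 w) z) (at 0)"
    using has_real_derivative_along_line[OF V w12(1), of z 0 d]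
      has_real_derivative_along_line[OF V w12(2), of z 0 d] z by simp_all
  then have "(g has_real_derivative fst d * (fst d * pd1 (pd1 w) z + snd d * pd2 (pd1 w) z)
      + snd d * (fst d * pd1 (pd2 w) z + snd d * pd2 (pd2 w) z)) (at 0)"
    unfolding g_def by (intro DERIV_add DERIV_cmult)
  then have "(g has_real_derivative ?Q) (at 0)"
    using pd_mixed_commute[OF V w z] by (simp add: algebra_simps)
  then obtain \<delta> where \<delta>: "\<delta> > 0" "\<And>h. 0 < h \<Longrightarrow> h < \<delta> \<Longrightarrow> g 0 < g (0 + h)"
    using DERIV_pos_inc_right[OF _ Q] by blast
  obtain \<rho> where \<rho>: "\<rho> > 0" "\<And>\<tau>. \<bar>\<tau>\<bar> < \<rho> \<Longrightarrow> z + \<tau> *\<^sub>R d \<in> V"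
    using open_line_nbhd[OF V z] by blast
  define t where "t = min \<delta> \<rho> / 2"
  have t: "0 < t" "t < \<delta>" "t < \<rho>" using \<delta>(1) \<rho>(1) by (auto simp: t_def)
  have "\<exists>\<xi>>0. \<xi> < t \<and> w (z + t *\<^sub>R d) - w (z + 0 *\<^sub>R d) = (t - 0) * g \<xi>"
  proof (rule MVT2[OF t(1)])
    fix \<tau> assume "0 \<le> \<tau>" "\<tau> \<le> t"
    with t \<rho>(2)[of \<tau>] show "((\<lambda>s. w (z + s *\<^sub>R d)) has_real_derivative g \<tau>) (at \<tau>)"
      unfolding g_def by (intro has_real_derivative_along_line[OF V w1]) simp
  qed
  then obtain \<xi> where \<xi>: "0 < \<xi>" "\<xi> < t" "w (z + t *\<^sub>R d) - w z = t * g \<xi>" by auto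
  have "g 0 = 0"
    using local_max_imp_pd_zero[OF V w1 z max] by (simp add: g_def)
  with \<delta>(2)[of \<xi>] \<xi> t have "t * g \<xi> > 0" by simp
  with \<xi>(3) have "w (z + t *\<^sub>R d) > w z" by simp
  moreover have "w (z + t *\<^sub>R d) \<le> w z" using max \<rho>(2) t by simp
  ultimately show False by simp
qed

lemma trace_nonpos_if_form_nonpos:
  fixes E F G a b c :: real
  assumes "G > 0" "E * G - F\<^sup>2 > 0"
    and Q: "\<And>d1 d2. d1 * d1 * a + 2 * d1 * d2 * b + d2 * d2 * c \<le> 0"
  shows "G * a - 2 * F * b + E * c \<le> 0"
proof -
  have "G * (G * a - 2 * F * b + E * c) = (G * G * a + 2 * G * (- F) * b + (- F) * (- F) * c) + (E * G - F\<^sup>2) * c"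
    by (simp add: algebra_simps power2_eq_square)
  also have "\<dots> \<le> 0"
  proof -
    have "c \<le> 0" using Q[of 0 1] by simp
    with assms(2) have "(E * G - F\<^sup>2) * c \<le> 0" by (simp add: mult_nonneg_nonpos)
    with Q[of G "- F"] show ?thesis by linarith
  qed
  finally show ?thesis using assms(1) by (simp add: mult_le_0_iff)
qed

section \<open>The strong maximum principle for a planar elliptic operator\<close>

lemma pd_exp:
  fixes f :: "real \<times> real \<Rightarrow> real"
  assumes V: "open V" and f: "Ck_on 2 V f" and q: "q \<in> V"
  shows "pd1 (\<lambda>z. exp (f z)) q = exp (f q) * pd1 f q"
    "pd2 (\<lambda>z. exp (f z)) q = exp (f q) * pd2 f q"
    "pd1 (pd1 (\<lambda>z. exp (f z))) q = exp (f q) * pd1 f q * pd1 f q + exp (f q) * pd1 (pd1 f) q"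
    "pd2 (pd1 (\<lambda>z. exp (f z))) q = exp (f q) * pd2 f q * pd1 f q + exp (f q) * pd2 (pd1 f) q"
    "pd2 (pd2 (\<lambda>z. exp (f z))) q = exp (f q) * pd2 f q * pd2 f q + exp (f q) * pd2 (pd2 f) q"
proof -
  have f1: "Ck_on (Suc 1) V f" and f12: "Ck_on (Suc 0) V (pd1 f)" "Ck_on (Suc 0) V (pd2 f)"
    using f by (simp_all add: numeral_2_eq_2)
  note d = has_dir_deriv_chain[OF DERIV_exp Ck_on_Suc_has_dir_deriv(1)[OF f1]]
    has_dir_deriv_chain[OF DERIV_exp Ck_on_Suc_has_dir_deriv(2)[OF f1]]
  have e1: "pd1 (\<lambda>z. exp (f z)) z = exp (f z) * pd1 f z" and e2: "pd2 (\<lambda>z. exp (f z)) z = exp (f z) * pd2 f z"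
    if "z \<in> V" for z
    using d[OF that] by (auto intro: has_dir_deriv_imp_pd1 has_dir_deriv_imp_pd2)
  show "pd1 (\<lambda>z. exp (f z)) q = exp (f q) * pd1 f q" "pd2 (\<lambda>z. exp (f z)) q = exp (f q) * pd2 f q"
    using e1 e2 q by auto
  show "pd1 (pd1 (\<lambda>z. exp (f z))) q = exp (f q) * pd1 f q * pd1 f q + exp (f q) * pd1 (pd1 f) q"
    using pd_cong(1)[OF V q e1] has_dir_deriv_mult[OF d(1)[OF q] Ck_on_Suc_has_dir_deriv(1)[OF f12(1) q]]
    by (simp add: has_dir_deriv_imp_pd1)
  show "pd2 (pd1 (\<lambda>z. exp (f z))) q = exp (f q) * pd2 f q * pd1 f q + exp (f q) * pd2 (pd1 f) q"
    using pd_cong(2)[OF V q e1] has_dir_deriv_mult[OF d(2)[OF q] Ck_on_Suc_has_dir_deriv(2)[OF f12(1) q]]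
    by (simp add: has_dir_deriv_imp_pd2)
  show "pd2 (pd2 (\<lambda>z. exp (f z))) q = exp (f q) * pd2 f q * pd2 f q + exp (f q) * pd2 (pd2 f) q"
    using pd_cong(2)[OF V q e2] has_dir_deriv_mult[OF d(2)[OF q] Ck_on_Suc_has_dir_deriv(2)[OF f12(2) q]]
    by (simp add: has_dir_deriv_imp_pd2)
qed

definition elliptic_op ::
    "(real \<times> real \<Rightarrow> real) \<Rightarrow> (real \<times> real \<Rightarrow> real) \<Rightarrow> (real \<times> real \<Rightarrow> real) \<Rightarrow>
     (real \<times> real \<Rightarrow> real) \<Rightarrow> (real \<times> real \<Rightarrow> real) \<Rightarrow> (real \<times> real \<Rightarrow> real) \<Rightarrow> real \<times> real \<Rightarrow> real"
  where "elliptic_op E F G P1 P2 g z =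
    (G z * pd1 (pd1 g) z - 2 * F z * pd2 (pd1 g) z + E z * pd2 (pd2 g) z) / (E z * G z - (F z)\<^sup>2)
    + P1 z * pd1 g z + P2 z * pd2 g z"

definition elliptic_coeffs_on ::
    "(real \<times> real) set \<Rightarrow> (real \<times> real \<Rightarrow> real) \<Rightarrow> (real \<times> real \<Rightarrow> real) \<Rightarrow> (real \<times> real \<Rightarrow> real) \<Rightarrow>
     (real \<times> real \<Rightarrow> real) \<Rightarrow> (real \<times> real \<Rightarrow> real) \<Rightarrow> bool"
  where "elliptic_coeffs_on V E F G P1 P2 \<longleftrightarrow>
    continuous_on V E \<and> continuous_on V F \<and> continuous_on V G \<and> continuous_on V P1 \<and> continuous_on V P2 \<and>
    (\<forall>z\<in>V. E z > 0 \<and> G z > 0 \<and> E z * G z - (F z)\<^sup>2 > 0)"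

lemma elliptic_op_exp:
  fixes f :: "real \<times> real \<Rightarrow> real"
  assumes "open V" "Ck_on 2 V f" "z \<in> V"
  shows "elliptic_op E F G P1 P2 (\<lambda>z. exp (f z)) z = exp (f z) * (elliptic_op E F G P1 P2 f z
    + (G z * (pd1 f z)\<^sup>2 - 2 * F z * pd1 f z * pd2 f z + E z * (pd2 f z)\<^sup>2) / (E z * G z - (F z)\<^sup>2))"
proof -
  have "(G * (e * a * a + e * a11) - 2 * F * (e * b * a + e * a21) + E * (e * b * b + e * a22)) / D
      + P1 * (e * a) + P2 * (e * b)
    = e * ((G * a11 - 2 * F * a21 + E * a22) / D + P1 * a + P2 * b + (G * a\<^sup>2 - 2 * F * a * b + E * b\<^sup>2) / D)"
    for e a b a11 a21 a22 D E F G P1 P2 :: real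
  proof -
    have "G * (e * a * a + e * a11) - 2 * F * (e * b * a + e * a21) + E * (e * b * b + e * a22)
      = e * (G * a11 - 2 * F * a21 + E * a22) + e * (G * a\<^sup>2 - 2 * F * a * b + E * b\<^sup>2)"
      by (simp add: algebra_simps power2_eq_square)
    then show ?thesis by (simp add: add_divide_distrib distrib_left ac_simps)
  qed
  then show ?thesis unfolding elliptic_op_def pd_exp[OF assms] .
qed

lemma pd_affine:
  fixes f k :: "real \<times> real \<Rightarrow> real"
  assumes V: "open V" and f: "Ck_on 2 V f" and k: "Ck_on 2 V k" and z: "z \<in> V"
  shows "pd1 (\<lambda>z. f z + \<epsilon> * k z + c) z = pd1 f z + \<epsilon> * pd1 k z"
    "pd2 (\<lambda>z. f z + \<epsilon> * k z + c) z = pd2 f z + \<epsilon> * pd2 k z"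
    "pd1 (pd1 (\<lambda>z. f z + \<epsilon> * k z + c)) z = pd1 (pd1 f) z + \<epsilon> * pd1 (pd1 k) z"
    "pd2 (pd1 (\<lambda>z. f z + \<epsilon> * k z + c)) z = pd2 (pd1 f) z + \<epsilon> * pd2 (pd1 k) z"
    "pd2 (pd2 (\<lambda>z. f z + \<epsilon> * k z + c)) z = pd2 (pd2 f) z + \<epsilon> * pd2 (pd2 k) z"
proof -
  have affine: "has_dir_deriv (\<lambda>z. g z + \<epsilon> * h z + c') e y (dg + \<epsilon> * dh)"
    if "has_dir_deriv g e y dg" "has_dir_deriv h e y dh" for g h :: "real \<times> real \<Rightarrow> real" and c' e y dg dh
    using has_dir_deriv_add[OF has_dir_deriv_add[OF that(1) has_dir_deriv_mult[OF has_dir_deriv_const that(2)]]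
        has_dir_deriv_const, of \<epsilon> c']
    by simp
  have f1: "Ck_on (Suc 1) V f" "Ck_on (Suc 1) V k"
    and f12: "Ck_on (Suc 0) V (pd1 f)" "Ck_on (Suc 0) V (pd2 f)" "Ck_on (Suc 0) V (pd1 k)" "Ck_on (Suc 0) V (pd2 k)"
    using f k by (simp_all add: numeral_2_eq_2)
  have c1: "pd1 (\<lambda>z. f z + \<epsilon> * k z + c) y = pd1 f y + \<epsilon> * pd1 k y"
    and c2: "pd2 (\<lambda>z. f z + \<epsilon> * k z + c) y = pd2 f y + \<epsilon> * pd2 k y" if "y \<in> V" for y
    using affine[OF Ck_on_Suc_has_dir_deriv(1)[OF f1(1) that] Ck_on_Suc_has_dir_deriv(1)[OF f1(2) that]]
      affine[OF Ck_on_Suc_has_dir_deriv(2)[OF f1(1) that] Ck_on_Suc_has_dir_deriv(2)[OF f1(2) that]]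
    by (auto intro: has_dir_deriv_imp_pd1 has_dir_deriv_imp_pd2)
  show "pd1 (\<lambda>z. f z + \<epsilon> * k z + c) z = pd1 f z + \<epsilon> * pd1 k z"
    "pd2 (\<lambda>z. f z + \<epsilon> * k z + c) z = pd2 f z + \<epsilon> * pd2 k z"
    using c1 c2 z by auto
  show "pd1 (pd1 (\<lambda>z. f z + \<epsilon> * k z + c)) z = pd1 (pd1 f) z + \<epsilon> * pd1 (pd1 k) z"
    using pd_cong(1)[OF V z c1] affine[OF Ck_on_Suc_has_dir_deriv(1)[OF f12(1) z] Ck_on_Suc_has_dir_deriv(1)[OF f12(3) z], of 0]
    by (simp add: has_dir_deriv_imp_pd1)
  show "pd2 (pd1 (\<lambda>z. f z + \<epsilon> * k z + c)) z = pd2 (pd1 f) z + \<epsilon> * pd2 (pd1 k) z"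
    using pd_cong(2)[OF V z c1] affine[OF Ck_on_Suc_has_dir_deriv(2)[OF f12(1) z] Ck_on_Suc_has_dir_deriv(2)[OF f12(3) z], of 0]
    by (simp add: has_dir_deriv_imp_pd2)
  show "pd2 (pd2 (\<lambda>z. f z + \<epsilon> * k z + c)) z = pd2 (pd2 f) z + \<epsilon> * pd2 (pd2 k) z"
    using pd_cong(2)[OF V z c2] affine[OF Ck_on_Suc_has_dir_deriv(2)[OF f12(2) z] Ck_on_Suc_has_dir_deriv(2)[OF f12(4) z], of 0]
    by (simp add: has_dir_deriv_imp_pd2)
qed

lemma elliptic_op_affine:
  assumes "open V" "Ck_on 2 V f" "Ck_on 2 V k" "z \<in> V"
  shows "elliptic_op E F G P1 P2 (\<lambda>z. f z + \<epsilon> * k z + c) z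
    = elliptic_op E F G P1 P2 f z + \<epsilon> * elliptic_op E F G P1 P2 k z"
  unfolding elliptic_op_def pd_affine[OF assms]
  by (simp add: algebra_simps add_divide_distrib diff_divide_distrib)

lemma dist_real_pair_sq: "(dist z y)\<^sup>2 = (fst z - fst y)\<^sup>2 + (snd z - snd y)\<^sup>2" for y z :: "real \<times> real"
  by (cases z, cases y) (simp add: dist_Pair_Pair dist_real_def)

definition hopf_exponent :: "real \<Rightarrow> real \<times> real \<Rightarrow> real \<times> real \<Rightarrow> real"
  where "hopf_exponent \<alpha> y z = - \<alpha> * ((fst z - fst y)\<^sup>2 + (snd z - snd y)\<^sup>2)"

lemma hopf_exponent_eq_dist: "hopf_exponent \<alpha> y z = - \<alpha> * (dist z y)\<^sup>2"
  by (simp add: hopf_exponent_def dist_real_pair_sq)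

lemma hopf_exponent_eq:
  "hopf_exponent \<alpha> y = (\<lambda>z. (- \<alpha>) * ((fst z + - fst y) * (fst z + - fst y) + (snd z + - snd y) * (snd z + - snd y)))"
  by (simp add: fun_eq_iff hopf_exponent_def power2_eq_square)

lemma Ck_on_hopf_exponent: "open U \<Longrightarrow> Ck_on k U (hopf_exponent \<alpha> y)"
  unfolding hopf_exponent_eq by (intro Ck_on_mult Ck_on_add Ck_on_const Ck_on_fst Ck_on_snd)

lemma pd_hopf_exponent:
  "pd1 (hopf_exponent \<alpha> y) z = - 2 * \<alpha> * (fst z - fst y)"
  "pd2 (hopf_exponent \<alpha> y) z = - 2 * \<alpha> * (snd z - snd y)"
  "pd1 (pd1 (hopf_exponent \<alpha> y)) z = - 2 * \<alpha>"
  "pd2 (pd1 (hopf_exponent \<alpha> y)) z = 0"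
  "pd2 (pd2 (hopf_exponent \<alpha> y)) z = - 2 * \<alpha>"
proof -
  have "has_dir_deriv (hopf_exponent \<alpha> y) e z
      (0 * ((fst z + - fst y) * (fst z + - fst y) + (snd z + - snd y) * (snd z + - snd y))
       + (- \<alpha>) * (((fst e + 0) * (fst z + - fst y) + (fst z + - fst y) * (fst e + 0))
         + ((snd e + 0) * (snd z + - snd y) + (snd z + - snd y) * (snd e + 0))))" for e z
    unfolding hopf_exponent_eq
    by (intro has_dir_deriv_mult has_dir_deriv_add has_dir_deriv_const has_dir_deriv_fst has_dir_deriv_snd)
  from has_dir_deriv_imp_pd1[OF this[of "(1, 0)"]] has_dir_deriv_imp_pd2[OF this[of "(0, 1)"]]
  have pd1: "pd1 (hopf_exponent \<alpha> y) = (\<lambda>z. - 2 * \<alpha> * (fst z - fst y))"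
    and pd2: "pd2 (hopf_exponent \<alpha> y) = (\<lambda>z. - 2 * \<alpha> * (snd z - snd y))"
    by (simp_all add: fun_eq_iff algebra_simps)
  then show "pd1 (hopf_exponent \<alpha> y) z = - 2 * \<alpha> * (fst z - fst y)"
    "pd2 (hopf_exponent \<alpha> y) z = - 2 * \<alpha> * (snd z - snd y)"
    by simp_all
  have "has_dir_deriv (\<lambda>z. - 2 * \<alpha> * (g z - c)) e z (- 2 * \<alpha> * g')"
    if "has_dir_deriv g e z g'" for g :: "real \<times> real \<Rightarrow> real" and c e g'
    using has_dir_deriv_mult[OF has_dir_deriv_const[of "- 2 * \<alpha>"]
        has_dir_deriv_add[OF that has_dir_deriv_const[of "- c"]]]
    by simp
  from this[OF has_dir_deriv_fst, of "fst y" "(1, 0)"] this[OF has_dir_deriv_fst, of "fst y" "(0, 1)"]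
    this[OF has_dir_deriv_snd, of "snd y" "(0, 1)"]
  show "pd1 (pd1 (hopf_exponent \<alpha> y)) z = - 2 * \<alpha>" "pd2 (pd1 (hopf_exponent \<alpha> y)) z = 0"
    "pd2 (pd2 (hopf_exponent \<alpha> y)) z = - 2 * \<alpha>"
    unfolding pd1 pd2 by (auto dest!: has_dir_deriv_imp_pd1 has_dir_deriv_imp_pd2)
qed

lemma elliptic_op_hopf_barrier:
  assumes "open V" "z \<in> V"
  shows "elliptic_op E F G P1 P2 (\<lambda>z. exp (hopf_exponent \<alpha> y z)) z = exp (hopf_exponent \<alpha> y z) *
    (4 * \<alpha>\<^sup>2 * ((G z * (fst z - fst y)\<^sup>2 - 2 * F z * (fst z - fst y) * (snd z - snd y) + E z * (snd z - snd y)\<^sup>2)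
        / (E z * G z - (F z)\<^sup>2))
     - 2 * \<alpha> * ((G z + E z) / (E z * G z - (F z)\<^sup>2))
     - 2 * \<alpha> * (P1 z * (fst z - fst y) + P2 z * (snd z - snd y)))"
proof -
  have "(G * - (2 * \<alpha>) - 2 * F * 0 + E * - (2 * \<alpha>)) / D + P1 * (- 2 * \<alpha> * a) + P2 * (- 2 * \<alpha> * b)
      + (G * (- 2 * \<alpha> * a)\<^sup>2 - 2 * F * (- 2 * \<alpha> * a) * (- 2 * \<alpha> * b) + E * (- 2 * \<alpha> * b)\<^sup>2) / D
    = 4 * \<alpha>\<^sup>2 * ((G * a\<^sup>2 - 2 * F * a * b + E * b\<^sup>2) / D) - 2 * \<alpha> * ((G + E) / D) - 2 * \<alpha> * (P1 * a + P2 * b)"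
    for a b D E F G P1 P2 :: real
    by (simp add: power2_eq_square algebra_simps add_divide_distrib diff_divide_distrib)
  from this[of "G z" "F z" "E z" "E z * G z - (F z)\<^sup>2" "P1 z" "fst z - fst y" "P2 z" "snd z - snd y"]
  show ?thesis
    unfolding elliptic_op_exp[OF assms(1) Ck_on_hopf_exponent[OF assms(1)] assms(2)]
    by (simp add: elliptic_op_def pd_hopf_exponent)
qed

lemma quadratic_form_lower_bound:
  fixes E F G a b :: real
  assumes "E > 0" "G > 0" "E * G - F\<^sup>2 > 0"
  shows "(a\<^sup>2 + b\<^sup>2) / (G + E) \<le> (G * a\<^sup>2 - 2 * F * a * b + E * b\<^sup>2) / (E * G - F\<^sup>2)"
proof -
  have "(G + E) * (G * a\<^sup>2 - 2 * F * a * b + E * b\<^sup>2)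
      = (G * a - F * b)\<^sup>2 + (E * b - F * a)\<^sup>2 + (E * G - F\<^sup>2) * (a\<^sup>2 + b\<^sup>2)"
    by (simp add: algebra_simps power2_eq_square)
  then have "(E * G - F\<^sup>2) * (a\<^sup>2 + b\<^sup>2) \<le> (G + E) * (G * a\<^sup>2 - 2 * F * a * b + E * b\<^sup>2)"
    by simp
  then show ?thesis using assms by (simp add: divide_simps mult.commute)
qed

lemma hopf_bracket_pos:
  fixes E F G P1 P2 a b R M C \<alpha> :: real
  assumes pos: "E > 0" "G > 0" "E * G - F\<^sup>2 > 0"
    and M: "G + E \<le> M" and C: "(G + E) / (E * G - F\<^sup>2) + (\<bar>P1\<bar> + \<bar>P2\<bar>) * R \<le> C"
    and ab: "R\<^sup>2 / 4 \<le> a\<^sup>2 + b\<^sup>2" "\<bar>a\<bar> \<le> R" "\<bar>b\<bar> \<le> R"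
    and \<alpha>: "\<alpha> > 0" "2 * C * M < \<alpha> * R\<^sup>2"
  shows "4 * \<alpha>\<^sup>2 * ((G * a\<^sup>2 - 2 * F * a * b + E * b\<^sup>2) / (E * G - F\<^sup>2))
    - 2 * \<alpha> * ((G + E) / (E * G - F\<^sup>2)) - 2 * \<alpha> * (P1 * a + P2 * b) > 0"
proof -
  have "R\<^sup>2 / 4 / M \<le> (a\<^sup>2 + b\<^sup>2) / (G + E)"
    using ab(1) M pos by (intro frac_le) auto
  also have "\<dots> \<le> (G * a\<^sup>2 - 2 * F * a * b + E * b\<^sup>2) / (E * G - F\<^sup>2)"
    by (rule quadratic_form_lower_bound[OF pos])
  finally have "4 * \<alpha>\<^sup>2 * (R\<^sup>2 / 4 / M) \<le> 4 * \<alpha>\<^sup>2 * ((G * a\<^sup>2 - 2 * F * a * b + E * b\<^sup>2) / (E * G - F\<^sup>2))"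
    by (rule mult_left_mono) simp
  moreover have "4 * \<alpha>\<^sup>2 * (R\<^sup>2 / 4 / M) = \<alpha> * (\<alpha> * R\<^sup>2 / M)"
    by (simp add: power2_eq_square)
  moreover have "\<alpha> * (2 * C) < \<alpha> * (\<alpha> * R\<^sup>2 / M)"
    using \<alpha> M pos by (intro mult_strict_left_mono) (simp_all add: pos_less_divide_eq)
  moreover have "P1 * a + P2 * b \<le> (\<bar>P1\<bar> + \<bar>P2\<bar>) * R"
    using mult_left_mono[OF ab(2) abs_ge_zero[of P1]] mult_left_mono[OF ab(3) abs_ge_zero[of P2]]
      abs_ge_self[of "P1 * a"] abs_ge_self[of "P2 * b"]
    by (simp add: abs_mult distrib_right)
  then have "2 * \<alpha> * ((G + E) / (E * G - F\<^sup>2) + (P1 * a + P2 * b)) \<le> 2 * \<alpha> * C"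
    using C \<alpha>(1) by (intro mult_left_mono) auto
  ultimately show ?thesis
    using distrib_left[of "2 * \<alpha>" "(G + E) / (E * G - F\<^sup>2)" "P1 * a + P2 * b"] by linarith
qed

lemma hopf_barrier_pos_at:
  assumes V: "open V" and z: "z \<in> V" and pos: "E z > 0" "G z > 0" "E z * G z - (F z)\<^sup>2 > 0"
    and M: "G z + E z \<le> M" and C: "(G z + E z) / (E z * G z - (F z)\<^sup>2) + (\<bar>P1 z\<bar> + \<bar>P2 z\<bar>) * R \<le> C"
    and R: "R > 0" "R / 2 \<le> dist z y" "dist z y \<le> R" and \<alpha>: "\<alpha> > 0" "2 * C * M < \<alpha> * R\<^sup>2"
  shows "elliptic_op E F G P1 P2 (\<lambda>z. exp (hopf_exponent \<alpha> y z)) z > 0"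
proof -
  note sq = dist_real_pair_sq[of z y]
  have "(R / 2)\<^sup>2 \<le> (dist z y)\<^sup>2" using R by (intro power_mono) auto
  then have ab1: "R\<^sup>2 / 4 \<le> (fst z - fst y)\<^sup>2 + (snd z - snd y)\<^sup>2" by (simp add: sq power_divide)
  have "(fst z - fst y)\<^sup>2 \<le> (dist z y)\<^sup>2" "(snd z - snd y)\<^sup>2 \<le> (dist z y)\<^sup>2" unfolding sq by simp_all
  then have "\<bar>fst z - fst y\<bar> \<le> dist z y" "\<bar>snd z - snd y\<bar> \<le> dist z y"
    by (metis abs_le_square_iff abs_of_nonneg zero_le_dist)+
  with R(3) have ab2: "\<bar>fst z - fst y\<bar> \<le> R" "\<bar>snd z - snd y\<bar> \<le> R" by linarith+
  have "0 < 4 * \<alpha>\<^sup>2 * ((G z * (fst z - fst y)\<^sup>2 - 2 * F z * (fst z - fst y) * (snd z - snd y)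
      + E z * (snd z - snd y)\<^sup>2) / (E z * G z - (F z)\<^sup>2))
    - 2 * \<alpha> * ((G z + E z) / (E z * G z - (F z)\<^sup>2))
    - 2 * \<alpha> * (P1 z * (fst z - fst y) + P2 z * (snd z - snd y))"
    by (rule hopf_bracket_pos[OF pos M C ab1 ab2 \<alpha>])
  then show ?thesis unfolding elliptic_op_hopf_barrier[OF V z] by simp
qed

lemma hopf_barrier_exists:
  assumes ell: "elliptic_coeffs_on V E F G P1 P2" and V: "open V" and R: "R > 0" and cb: "cball y R \<subseteq> V"
  obtains \<alpha> where "\<alpha> > 0"
    "\<And>z. R / 2 \<le> dist z y \<Longrightarrow> dist z y \<le> R \<Longrightarrow> elliptic_op E F G P1 P2 (\<lambda>z. exp (hopf_exponent \<alpha> y z)) z > 0"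
proof -
  have pos: "\<And>z. z \<in> cball y R \<Longrightarrow> E z > 0 \<and> G z > 0 \<and> E z * G z - (F z)\<^sup>2 > 0"
    using ell cb unfolding elliptic_coeffs_on_def by blast
  have ne: "cball y R \<noteq> {}" using R by simp
  have "continuous_on (cball y R) (\<lambda>z. G z + E z)"
    "continuous_on (cball y R) (\<lambda>z. (G z + E z) / (E z * G z - (F z)\<^sup>2) + (\<bar>P1 z\<bar> + \<bar>P2 z\<bar>) * R)"
    using ell pos continuous_on_subset[OF _ cb] unfolding elliptic_coeffs_on_def
    by (auto intro!: continuous_intros simp: less_le)
  from continuous_attains_sup[OF compact_cball ne this(1)] continuous_attains_sup[OF compact_cball ne this(2)]
  obtain zM zC where
    zM: "zM \<in> cball y R" "\<And>z. z \<in> cball y R \<Longrightarrow> G z + E z \<le> G zM + E zM" and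
    zC: "\<And>z. z \<in> cball y R \<Longrightarrow> (G z + E z) / (E z * G z - (F z)\<^sup>2) + (\<bar>P1 z\<bar> + \<bar>P2 z\<bar>) * R
      \<le> (G zC + E zC) / (E zC * G zC - (F zC)\<^sup>2) + (\<bar>P1 zC\<bar> + \<bar>P2 zC\<bar>) * R"
    by blast
  define M where "M = G zM + E zM"
  define C where "C = (G zC + E zC) / (E zC * G zC - (F zC)\<^sup>2) + (\<bar>P1 zC\<bar> + \<bar>P2 zC\<bar>) * R"
  define \<alpha> where "\<alpha> = 2 * \<bar>C\<bar> * M / R\<^sup>2 + 1"
  have M: "M > 0" using pos[OF zM(1)] by (simp add: M_def)
  then have \<alpha>: "\<alpha> > 0" using R by (simp add: \<alpha>_def add_nonneg_pos)
  have "2 * C * M \<le> 2 * \<bar>C\<bar> * M" using M by (simp add: mult_right_mono)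
  also have "\<dots> < \<alpha> * R\<^sup>2" using R by (simp add: \<alpha>_def field_simps)
  finally have \<alpha>R: "2 * C * M < \<alpha> * R\<^sup>2" .
  show ?thesis
  proof (rule that[OF \<alpha>])
    fix z assume z: "R / 2 \<le> dist z y" "dist z y \<le> R"
    then have "z \<in> cball y R" by (simp add: dist_commute)
    with pos zM(2) zC z R cb \<alpha> \<alpha>R show "elliptic_op E F G P1 P2 (\<lambda>z. exp (hopf_exponent \<alpha> y z)) z > 0"
      by (intro hopf_barrier_pos_at[OF V, where M=M and C=C and R=R]) (auto simp: M_def C_def)
  qed
qed

lemma elliptic_op_nonpos_at_local_max:
  assumes U: "open U" and w: "Ck_on 2 U w" and z: "z \<in> U" and wmax: "\<And>y. y \<in> U \<Longrightarrow> w y \<le> w z"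
    and pos: "G z > 0" "E z * G z - (F z)\<^sup>2 > 0"
  shows "elliptic_op E F G P1 P2 w z \<le> 0"
proof -
  have "pd1 w z = 0" "pd2 w z = 0"
    using local_max_imp_pd_zero[of U 1 w z] U w z wmax by (simp_all add: numeral_2_eq_2)
  moreover have "G z * pd1 (pd1 w) z - 2 * F z * pd2 (pd1 w) z + E z * pd2 (pd2 w) z \<le> 0"
    using local_max_imp_hessian_nonpos[OF U w z wmax]
    by (intro trace_nonpos_if_form_nonpos[OF pos]) (metis fst_conv snd_conv)
  ultimately show ?thesis
    using pos(2) by (simp add: elliptic_op_def divide_nonpos_pos)
qed

lemma elliptic_strict_subsolution_max:
  assumes K: "compact K" and U: "open U" "U \<subseteq> K" and w: "Ck_on 2 U w" "continuous_on K w"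
    and pos: "\<And>z. z \<in> U \<Longrightarrow> G z > 0 \<and> E z * G z - (F z)\<^sup>2 > 0"
    and L: "\<And>z. z \<in> U \<Longrightarrow> elliptic_op E F G P1 P2 w z > 0"
    and bdry: "\<And>z. z \<in> K - U \<Longrightarrow> w z \<le> c" and z: "z \<in> K"
  shows "w z \<le> c"
proof -
  obtain zm where zm: "zm \<in> K" "\<And>z. z \<in> K \<Longrightarrow> w z \<le> w zm"
    using continuous_attains_sup[OF K _ w(2)] z by blast
  have "zm \<notin> U"
  proof
    assume "zm \<in> U"
    with U zm(2) have "elliptic_op E F G P1 P2 w zm \<le> 0"
      using pos by (intro elliptic_op_nonpos_at_local_max[OF U(1) w(1)]) auto
    with L[OF \<open>zm \<in> U\<close>] show False by simp
  qed
  then show ?thesis using bdry zm z by fastforce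
qed

lemma pos_deriv_not_right_max:
  fixes g :: "real \<Rightarrow> real"
  assumes "(g has_real_derivative D) (at 0)" "D > 0" "\<And>t. 0 < t \<Longrightarrow> t \<le> 1 / 2 \<Longrightarrow> g t \<le> g 0"
  shows False
proof -
  obtain h0 where "h0 > 0" "\<And>h. 0 < h \<Longrightarrow> h < h0 \<Longrightarrow> g 0 < g (0 + h)"
    using DERIV_pos_inc_right[OF assms(1,2)] by blast
  moreover define t where "t = min (h0 / 2) (1 / 2)"
  ultimately have "g 0 < g t" "g t \<le> g 0" using assms(3)[of t] by simp_all
  then show False by simp
qed

lemma compact_uniform_gap_below:
  fixes f :: "'a::topological_space \<Rightarrow> real"
  assumes "compact S" "continuous_on S f" "\<And>z. z \<in> S \<Longrightarrow> f z < c"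
  obtains \<delta> where "\<delta> > 0" "\<And>z. z \<in> S \<Longrightarrow> f z \<le> c - \<delta>"
proof (cases "S = {}")
  case False
  then obtain zm where "zm \<in> S" "\<And>z. z \<in> S \<Longrightarrow> f z \<le> f zm"
    using continuous_attains_sup[OF assms(1) _ assms(2)] by blast
  with assms(3) show ?thesis by (intro that[of "c - f zm"]) auto
qed (use that[of 1] in simp)

definition hopf_perturbation ::
    "real \<Rightarrow> real \<Rightarrow> real \<times> real \<Rightarrow> real \<Rightarrow> (real \<times> real \<Rightarrow> real) \<Rightarrow> real \<times> real \<Rightarrow> real"
  where "hopf_perturbation \<alpha> \<epsilon> y R f z = f z + \<epsilon> * exp (hopf_exponent \<alpha> y z) + - \<epsilon> * exp (- \<alpha> * R\<^sup>2)"

lemma hopf_perturbation_on_sphere: "dist z y = R \<Longrightarrow> hopf_perturbation \<alpha> \<epsilon> y R f z = f z"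
  by (simp add: hopf_perturbation_def hopf_exponent_eq_dist)

lemma Ck_on_hopf_perturbation:
  assumes "open V" "Ck_on 2 V f"
  shows "Ck_on 2 V (hopf_perturbation \<alpha> \<epsilon> y R f)"
  unfolding hopf_perturbation_def[abs_def]
  by (intro Ck_on_add Ck_on_mult Ck_on_const Ck_on_exp Ck_on_hopf_exponent assms)

lemma hopf_perturbation_boundary:
  assumes "\<alpha> > 0" "\<epsilon> > 0" "\<And>z. dist z y = R / 2 \<Longrightarrow> f z + \<epsilon> \<le> c" "f z \<le> c"
    "dist z y = R / 2 \<or> dist z y = R"
  shows "hopf_perturbation \<alpha> \<epsilon> y R f z \<le> c"
  using assms(5)
proof
  assume z: "dist z y = R / 2"
  have "\<epsilon> * exp (hopf_exponent \<alpha> y z) \<le> \<epsilon>"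
    using assms(1,2) by (simp add: hopf_exponent_eq_dist)
  moreover have "0 < \<epsilon> * exp (- \<alpha> * R\<^sup>2)" using assms(2) by simp
  ultimately show ?thesis unfolding hopf_perturbation_def using assms(3)[OF z] by linarith
qed (use assms(4) hopf_perturbation_on_sphere in simp)

lemma hopf_comparison:
  assumes V: "open V" and ell: "elliptic_coeffs_on V E F G P1 P2"
    and f: "Ck_on 2 V f" and Lf: "\<And>z. z \<in> V \<Longrightarrow> elliptic_op E F G P1 P2 f z \<ge> 0"
    and le: "\<And>z. z \<in> V \<Longrightarrow> f z \<le> c" and cb: "cball y R \<subseteq> V"
    and Lk: "\<And>z. R / 2 \<le> dist z y \<Longrightarrow> dist z y \<le> R \<Longrightarrow>
               elliptic_op E F G P1 P2 (\<lambda>z. exp (hopf_exponent \<alpha> y z)) z > 0"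
    and \<epsilon>: "\<epsilon> > 0" and inner: "\<And>z. dist z y = R / 2 \<Longrightarrow> f z + \<epsilon> \<le> c"
    and \<alpha>: "\<alpha> > 0" and z: "R / 2 \<le> dist z y" "dist z y \<le> R"
  shows "hopf_perturbation \<alpha> \<epsilon> y R f z \<le> c"
proof -
  note wC = Ck_on_hopf_perturbation[OF V f, of \<alpha> \<epsilon> y R]
  define U where "U = ball y R - cball y (R / 2)"
  have U: "open U" "U \<subseteq> cball y R - ball y (R / 2)" "U \<subseteq> V"
    using cb by (auto simp: U_def)
  show ?thesis
  proof (rule elliptic_strict_subsolution_max[OF _ U(1,2) Ck_on_subset[OF wC U(3)]])
    show "compact (cball y R - ball y (R / 2))" by (intro compact_diff) auto
    show "continuous_on (cball y R - ball y (R / 2)) (hopf_perturbation \<alpha> \<epsilon> y R f)"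
      using Ck_on_imp_continuous_on[OF wC] cb by (blast intro: continuous_on_subset)
    show "G z > 0 \<and> E z * G z - (F z)\<^sup>2 > 0" if "z \<in> U" for z
      using ell U(3) that unfolding elliptic_coeffs_on_def by blast
    show "elliptic_op E F G P1 P2 (hopf_perturbation \<alpha> \<epsilon> y R f) z > 0" if "z \<in> U" for z
    proof -
      have "z \<in> V" "R / 2 \<le> dist z y" "dist z y \<le> R" using that U(3) by (auto simp: U_def dist_commute)
      with Lf[of z] Lk[of z] \<epsilon> show ?thesis
        unfolding hopf_perturbation_def[abs_def]
          elliptic_op_affine[OF V f Ck_on_exp[OF V Ck_on_hopf_exponent[OF V]] \<open>z \<in> V\<close>]
        by (simp add: add_nonneg_pos)
    qed
    show "hopf_perturbation \<alpha> \<epsilon> y R f z \<le> c" if "z \<in> cball y R - ball y (R / 2) - U" for z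
      using that cb by (intro hopf_perturbation_boundary[OF \<alpha> \<epsilon> inner] le) (auto simp: U_def dist_commute)
  qed (use z in \<open>auto simp: dist_commute\<close>)
qed

lemma hopf_perturbation_line_deriv:
  assumes V: "open V" and f: "Ck_on 2 V f" and q: "q \<in> V" "dist q y = R"
    and f1: "pd1 f q = 0" "pd2 f q = 0"
  shows "((\<lambda>t. hopf_perturbation \<alpha> \<epsilon> y R f (q + t *\<^sub>R (y - q))) has_real_derivative
    \<epsilon> * exp (- \<alpha> * R\<^sup>2) * 2 * \<alpha> * R\<^sup>2) (at 0)"
proof -
  define w where "w = hopf_perturbation \<alpha> \<epsilon> y R f"
  have wC: "Ck_on (Suc 1) V w"
    using Ck_on_hopf_perturbation[OF V f] by (simp only: w_def numeral_2_eq_2 One_nat_def)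
  have hq: "hopf_exponent \<alpha> y q = - \<alpha> * R\<^sup>2" using q(2) by (simp add: hopf_exponent_eq_dist)
  have pw: "pd1 w q = \<epsilon> * exp (- \<alpha> * R\<^sup>2) * 2 * \<alpha> * (fst y - fst q)"
    "pd2 w q = \<epsilon> * exp (- \<alpha> * R\<^sup>2) * 2 * \<alpha> * (snd y - snd q)"
    using f1 unfolding w_def hopf_perturbation_def[abs_def]
      pd_affine[OF V f Ck_on_exp[OF V Ck_on_hopf_exponent[OF V]] q(1)]
      pd_exp[OF V Ck_on_hopf_exponent[OF V] q(1)]
    by (simp_all add: pd_hopf_exponent hq algebra_simps)
  have "(fst y - fst q)\<^sup>2 + (snd y - snd q)\<^sup>2 = R\<^sup>2"
    using q(2) dist_real_pair_sq[of y q] by (simp add: dist_commute)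
  moreover have "fst (y - q) * pd1 w q + snd (y - q) * pd2 w q
      = \<epsilon> * exp (- \<alpha> * R\<^sup>2) * 2 * \<alpha> * ((fst y - fst q)\<^sup>2 + (snd y - snd q)\<^sup>2)"
    unfolding pw by (simp add: power2_eq_square algebra_simps)
  ultimately show ?thesis
    using has_real_derivative_along_line[OF V wC, of q 0 "y - q"] q(1) by (simp add: w_def)
qed

lemma hopf_boundary_point:
  assumes V: "open V" and ell: "elliptic_coeffs_on V E F G P1 P2"
    and f: "Ck_on 2 V f" and Lf: "\<And>z. z \<in> V \<Longrightarrow> elliptic_op E F G P1 P2 f z \<ge> 0"
    and le: "\<And>z. z \<in> V \<Longrightarrow> f z \<le> c"
    and R: "R > 0" and cb: "cball y R \<subseteq> V" and lt: "\<And>z. z \<in> ball y R \<Longrightarrow> f z < c"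
    and q: "dist q y = R" "f q = c"
  shows False
proof -
  obtain \<alpha> where \<alpha>: "\<alpha> > 0" and Lk: "\<And>z. R / 2 \<le> dist z y \<Longrightarrow> dist z y \<le> R \<Longrightarrow>
      elliptic_op E F G P1 P2 (\<lambda>z. exp (hopf_exponent \<alpha> y z)) z > 0"
    using hopf_barrier_exists[OF ell V R cb] by blast
  have sph: "sphere y (R / 2) \<subseteq> ball y R" using R by (auto simp: dist_commute)
  then have "continuous_on (sphere y (R / 2)) f"
    using Ck_on_imp_continuous_on[OF f] cb ball_subset_cball by (blast intro: continuous_on_subset)
  moreover have "\<And>z. z \<in> sphere y (R / 2) \<Longrightarrow> f z < c" using lt sph by blast
  ultimately obtain \<delta> where \<delta>: "\<delta> > 0" "\<And>z. z \<in> sphere y (R / 2) \<Longrightarrow> f z \<le> c - \<delta>"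
    using compact_uniform_gap_below[OF compact_sphere] by metis
  have inner: "f z + \<delta> \<le> c" if "dist z y = R / 2" for z
    using \<delta>(2)[of z] that by (simp add: dist_commute)
  have qV: "q \<in> V" using q(1) cb by (auto simp: dist_commute)
  \<comment> \<open>The perturbed function is at most \<open>c = f q\<close> on the annulus but increases from \<open>q\<close> towards \<open>y\<close>.\<close>
  have seg: "hopf_perturbation \<alpha> \<delta> y R f (q + t *\<^sub>R (y - q)) \<le> hopf_perturbation \<alpha> \<delta> y R f q"
    if "0 < t" "t \<le> 1 / 2" for t
  proof -
    have "q + t *\<^sub>R (y - q) - y = (1 - t) *\<^sub>R (q - y)" by (simp add: algebra_simps)
    then have "dist (q + t *\<^sub>R (y - q)) y = (1 - t) * R"
      using q(1) that by (simp add: dist_norm)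
    then have "dist (q + t *\<^sub>R (y - q)) y = R - R * t" by (simp add: algebra_simps)
    moreover have "0 \<le> R * t" "R * t \<le> R * (1 / 2)" using that R by (simp_all add: mult_left_mono)
    ultimately have "R / 2 \<le> dist (q + t *\<^sub>R (y - q)) y" "dist (q + t *\<^sub>R (y - q)) y \<le> R"
      by linarith+
    from hopf_comparison[OF V ell f Lf le cb Lk \<delta>(1) inner \<alpha> this] show ?thesis
      by (simp add: hopf_perturbation_on_sphere q)
  qed
  have "pd1 f q = 0" "pd2 f q = 0"
    using local_max_imp_pd_zero[of V 1 f q] V f qV le q(2) by (simp_all add: numeral_2_eq_2)
  from hopf_perturbation_line_deriv[OF V f qV q(1) this, of \<alpha> \<delta>] show False
    by (rule pos_deriv_not_right_max) (use \<delta>(1) \<alpha> R seg in simp_all)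
qed

lemma nearest_point_of_level_set:
  fixes f :: "'a::heine_borel \<Rightarrow> real"
  assumes "continuous_on (cball y \<rho>) f" "x \<in> cball y \<rho>" "f x = c" "f y \<noteq> c"
  obtains q where "q \<in> cball y \<rho>" "f q = c" "dist y q > 0" "\<And>z. dist y z < dist y q \<Longrightarrow> f z \<noteq> c"
proof -
  have "closed {z \<in> cball y \<rho>. f z = c}"
    by (rule continuous_closed_preimage_constant[OF assms(1) closed_cball])
  moreover have "x \<in> {z \<in> cball y \<rho>. f z = c}" using assms(2,3) by simp
  ultimately obtain q where q: "q \<in> {z \<in> cball y \<rho>. f z = c}"
    and min: "\<And>z. z \<in> {z \<in> cball y \<rho>. f z = c} \<Longrightarrow> dist y q \<le> dist y z"
    using distance_attains_inf by blast
  show ?thesis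
  proof (rule that)
    show "q \<in> cball y \<rho>" "f q = c" using q by simp_all
    show "dist y q > 0" using q assms(4) by auto
    show "f z \<noteq> c" if "dist y z < dist y q" for z
      using min[of z] that q by auto
  qed
qed

lemma elliptic_strong_max_local:
  assumes V: "open V" and ell: "elliptic_coeffs_on V E F G P1 P2"
    and f: "Ck_on 2 V f" and Lf: "\<And>z. z \<in> V \<Longrightarrow> elliptic_op E F G P1 P2 f z \<ge> 0"
    and le: "\<And>z. z \<in> V \<Longrightarrow> f z \<le> c" and q0: "q0 \<in> V" "f q0 = c"
  obtains r where "r > 0" "\<And>z. z \<in> ball q0 r \<Longrightarrow> f z = c"
proof -
  obtain r0 where r0: "r0 > 0" "ball q0 r0 \<subseteq> V" using V q0(1) open_contains_ball by blast
  show ?thesis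
  proof (rule that[of "r0 / 2"])
    show "r0 / 2 > 0" using r0 by simp
    fix y assume y: "y \<in> ball q0 (r0 / 2)"
    show "f y = c"
    proof (rule ccontr)
      assume ne: "f y \<noteq> c"
      have cb: "cball y (dist y q0) \<subseteq> V"
      proof
        fix z assume "z \<in> cball y (dist y q0)"
        then have "dist q0 z < r0" using y dist_triangle[of q0 z y] by (simp add: dist_commute)
        then show "z \<in> V" using r0 by auto
      qed
      have "continuous_on (cball y (dist y q0)) f"
        using Ck_on_imp_continuous_on[OF f] cb by (rule continuous_on_subset)
      then obtain q where q: "q \<in> cball y (dist y q0)" "f q = c" "dist y q > 0"
        and lt: "\<And>z. dist y z < dist y q \<Longrightarrow> f z \<noteq> c"
        using nearest_point_of_level_set[of y "dist y q0" f q0 c] q0(2) ne by auto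
      have "cball y (dist y q) \<subseteq> V" using q(1) cb by auto
      moreover have "f z < c" if "z \<in> ball y (dist y q)" for z
      proof -
        have "z \<in> V" using that \<open>cball y (dist y q) \<subseteq> V\<close> by auto
        with lt[of z] le[of z] that show ?thesis by fastforce
      qed
      moreover have "dist q y = dist y q" by (rule dist_commute)
      ultimately show False
        using hopf_boundary_point[OF V ell f Lf le q(3), where y=y and q=q] q(2) by blast
    qed
  qed
qed

section \<open>The drift Laplacian in a chart\<close>

lemma metric_det_pos_if_inj:
  fixes X1 X2 :: "real^3"
  assumes inj: "inj (\<lambda>(s, t). s *\<^sub>R X1 + t *\<^sub>R X2)"
  shows "(X1 \<bullet> X1) * (X2 \<bullet> X2) - (X1 \<bullet> X2)\<^sup>2 > 0"
proof -
  have eq: "(X1 \<bullet> X1) * (X2 \<bullet> X2) - (X1 \<bullet> X2)\<^sup>2 = (norm (cross3 X1 X2))\<^sup>2"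
    using norm_cross[of X1 X2] by (simp only: power2_norm_eq_inner)
  have "cross3 X1 X2 \<noteq> 0"
  proof
    assume "cross3 X1 X2 = 0"
    then have L: "(X1 \<bullet> X2) *\<^sub>R X1 - (X1 \<bullet> X1) *\<^sub>R X2 = 0"
      using Lagrange[of X1 X1 X2] by simp
    show False
    proof (cases "X1 = 0")
      case True
      then have "(\<lambda>(s, t). s *\<^sub>R X1 + t *\<^sub>R X2) (1, 0) = (\<lambda>(s, t). s *\<^sub>R X1 + t *\<^sub>R X2) (0, 0)" by simp
      from injD[OF inj this] show False by simp
    next
      case False
      have "(\<lambda>(s, t). s *\<^sub>R X1 + t *\<^sub>R X2) (X1 \<bullet> X2, - (X1 \<bullet> X1)) = (\<lambda>(s, t). s *\<^sub>R X1 + t *\<^sub>R X2) (0, 0)"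
        using L by (simp add: algebra_simps)
      from injD[OF inj this] False show False by simp
    qed
  qed
  then show ?thesis unfolding eq by simp
qed

lemma orthogonal_to_frame_eq_zero:
  fixes X1 X2 n r :: "real^3"
  assumes D: "(X1 \<bullet> X1) * (X2 \<bullet> X2) - (X1 \<bullet> X2)\<^sup>2 \<noteq> 0"
    and n: "n \<bullet> n = 1" "n \<bullet> X1 = 0" "n \<bullet> X2 = 0"
    and r: "r \<bullet> n = 0" "r \<bullet> X1 = 0" "r \<bullet> X2 = 0"
  shows "r = 0"
proof -
  define c where "c = cross3 X1 X2"
  have cc: "c \<bullet> c = (X1 \<bullet> X1) * (X2 \<bullet> X2) - (X1 \<bullet> X2)\<^sup>2"
    unfolding c_def dot_cross by (simp add: power2_eq_square inner_commute)
  have "cross3 r c = 0" "cross3 n c = 0"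
    unfolding c_def Lagrange using r n by (simp_all add: inner_commute)
  then have r1: "(c \<bullet> c) *\<^sub>R r = (c \<bullet> r) *\<^sub>R c" and n1: "(c \<bullet> c) *\<^sub>R n = (c \<bullet> n) *\<^sub>R c"
    using Lagrange[of c c r] Lagrange[of c c n] cross_skew[of c r] cross_skew[of c n]
    by (simp_all add: inner_commute)
  have "(c \<bullet> n) * (c \<bullet> n) = c \<bullet> c"
    using arg_cong[OF n1, of "\<lambda>x. x \<bullet> n"] n by (simp add: inner_commute)
  moreover have "(c \<bullet> c) * (r \<bullet> n) = (c \<bullet> r) * (c \<bullet> n)"
    using arg_cong[OF r1, of "\<lambda>x. x \<bullet> n"] by (simp add: inner_commute)
  ultimately have "c \<bullet> r = 0" using r cc D by auto
  then show "r = 0" using r1 cc D by simp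
qed

lemma dual_basis_coeffs:
  fixes E F G a1 a2 :: real
  assumes "E * G - F\<^sup>2 \<noteq> 0"
  shows "(G * a1 - F * a2) / (E * G - F\<^sup>2) * E + (E * a2 - F * a1) / (E * G - F\<^sup>2) * F = a1"
    "(G * a1 - F * a2) / (E * G - F\<^sup>2) * F + (E * a2 - F * a1) / (E * G - F\<^sup>2) * G = a2"
proof -
  have "(G * a1 - F * a2) * E + (E * a2 - F * a1) * F = a1 * (E * G - F\<^sup>2)"
    "(G * a1 - F * a2) * F + (E * a2 - F * a1) * G = a2 * (E * G - F\<^sup>2)"
    by (simp_all add: algebra_simps power2_eq_square)
  with assms show "(G * a1 - F * a2) / (E * G - F\<^sup>2) * E + (E * a2 - F * a1) / (E * G - F\<^sup>2) * F = a1"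
    "(G * a1 - F * a2) / (E * G - F\<^sup>2) * F + (E * a2 - F * a1) / (E * G - F\<^sup>2) * G = a2"
    by (simp_all add: times_divide_eq_left flip: add_divide_distrib)
qed

lemma tangential_projection_eq:
  fixes X1 X2 n a :: "real^3"
  assumes D: "(X1 \<bullet> X1) * (X2 \<bullet> X2) - (X1 \<bullet> X2)\<^sup>2 \<noteq> 0"
    and n: "n \<bullet> n = 1" "n \<bullet> X1 = 0" "n \<bullet> X2 = 0"
  shows "(((X2 \<bullet> X2) * (X1 \<bullet> a) - (X1 \<bullet> X2) * (X2 \<bullet> a)) / ((X1 \<bullet> X1) * (X2 \<bullet> X2) - (X1 \<bullet> X2)\<^sup>2)) *\<^sub>R X1
       + (((X1 \<bullet> X1) * (X2 \<bullet> a) - (X1 \<bullet> X2) * (X1 \<bullet> a)) / ((X1 \<bullet> X1) * (X2 \<bullet> X2) - (X1 \<bullet> X2)\<^sup>2)) *\<^sub>R X2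
       = a - (a \<bullet> n) *\<^sub>R n"
    (is "?\<beta>1 *\<^sub>R X1 + ?\<beta>2 *\<^sub>R X2 = _")
proof -
  define r where "r = a - (a \<bullet> n) *\<^sub>R n - (?\<beta>1 *\<^sub>R X1 + ?\<beta>2 *\<^sub>R X2)"
  have "?\<beta>1 * (X1 \<bullet> X1) + ?\<beta>2 * (X1 \<bullet> X2) = X1 \<bullet> a" "?\<beta>1 * (X1 \<bullet> X2) + ?\<beta>2 * (X2 \<bullet> X2) = X2 \<bullet> a"
    using dual_basis_coeffs[OF D, of "X1 \<bullet> a" "X2 \<bullet> a"] by simp_all
  moreover have "r \<bullet> X1 = X1 \<bullet> a - ?\<beta>1 * (X1 \<bullet> X1) - ?\<beta>2 * (X1 \<bullet> X2)"
    unfolding r_def using n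
    by (simp only: inner_diff_left inner_add_left inner_scaleR_left inner_commute[of X2 X1]
        inner_commute[of a X1], simp?)
  moreover have "r \<bullet> X2 = X2 \<bullet> a - ?\<beta>1 * (X1 \<bullet> X2) - ?\<beta>2 * (X2 \<bullet> X2)"
    unfolding r_def using n
    by (simp only: inner_diff_left inner_add_left inner_scaleR_left inner_commute[of a X2], simp?)
  moreover have "r \<bullet> n = 0"
    unfolding r_def using n
    by (simp only: inner_diff_left inner_add_left inner_scaleR_left inner_commute[of X1 n] inner_commute[of X2 n])
  ultimately have "r \<bullet> n = 0" "r \<bullet> X1 = 0" "r \<bullet> X2 = 0" by linarith+
  then have "r = 0" by (rule orthogonal_to_frame_eq_zero[OF D n])
  then show ?thesis unfolding r_def by simp
qed

definition unit_normal_at :: "(real \<times> real \<Rightarrow> real^3) \<Rightarrow> real^3 \<Rightarrow> real \<times> real \<Rightarrow> bool"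
  where "unit_normal_at X n q \<longleftrightarrow> n \<bullet> n = 1 \<and> n \<bullet> pd1 X q = 0 \<and> n \<bullet> pd2 X q = 0 \<and> metric_det X q \<noteq> 0"

lemma pd_inner:
  assumes "Ck_on (Suc k) V X" "z \<in> V"
  shows "pd1 (\<lambda>z. X z \<bullet> a) z = pd1 X z \<bullet> a" "pd2 (\<lambda>z. X z \<bullet> a) z = pd2 X z \<bullet> a"
  using has_dir_deriv_inner[OF Ck_on_Suc_has_dir_deriv(1)[OF assms]]
    has_dir_deriv_inner[OF Ck_on_Suc_has_dir_deriv(2)[OF assms]]
  by (auto intro: has_dir_deriv_imp_pd1 has_dir_deriv_imp_pd2)

lemma pd2_inner:
  assumes V: "open V" and X: "Ck_on 2 V X" and q: "q \<in> V"
  shows "pd1 (pd1 (\<lambda>z. X z \<bullet> a)) q = pd1 (pd1 X) q \<bullet> a"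
    "pd2 (pd1 (\<lambda>z. X z \<bullet> a)) q = pd2 (pd1 X) q \<bullet> a"
    "pd2 (pd2 (\<lambda>z. X z \<bullet> a)) q = pd2 (pd2 X) q \<bullet> a"
proof -
  have X1: "Ck_on (Suc 1) V X" and X12: "Ck_on (Suc 0) V (pd1 X)" "Ck_on (Suc 0) V (pd2 X)"
    using X by (simp_all add: numeral_2_eq_2)
  show "pd1 (pd1 (\<lambda>z. X z \<bullet> a)) q = pd1 (pd1 X) q \<bullet> a"
    "pd2 (pd1 (\<lambda>z. X z \<bullet> a)) q = pd2 (pd1 X) q \<bullet> a"
    "pd2 (pd2 (\<lambda>z. X z \<bullet> a)) q = pd2 (pd2 X) q \<bullet> a"
    using pd_cong[OF V q pd_inner(1)[OF X1]] pd_cong[OF V q pd_inner(2)[OF X1]]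
      pd_inner[OF X12(1) q] pd_inner[OF X12(2) q]
    by simp_all
qed

lemma tgrad_linear:
  assumes "unit_normal_at X n q" "Ck_on (Suc k) V X" "q \<in> V"
  shows "tgrad X (\<lambda>z. X z \<bullet> a) q = a - (a \<bullet> n) *\<^sub>R n"
  unfolding tgrad_def Let_def pd_inner[OF assms(2,3)]
  by (rule tangential_projection_eq) (use assms(1) in \<open>auto simp: unit_normal_at_def metric_det_def\<close>)

lemma lap_local_linear:
  assumes V: "open V" and X: "Ck_on 2 V X" and q: "q \<in> V" and n: "unit_normal_at X n q"
  shows "lap_local X (\<lambda>z. X z \<bullet> a) q = mean_curv_vec X n q \<bullet> a"
proof -
  have X1: "Ck_on (Suc 1) V X" using X by (simp add: numeral_2_eq_2)
  have "v \<bullet> a - v \<bullet> (a - (a \<bullet> n) *\<^sub>R n) = (a \<bullet> n) * (v \<bullet> n)" for v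
    by (simp add: inner_diff_right)
  then show ?thesis
    unfolding lap_local_def mean_curv_vec_def Let_def tgrad_linear[OF n X1 q] pd2_inner[OF V X q]
      pd_inner[OF X1 q]
    by (simp add: algebra_simps inner_commute add_divide_distrib diff_divide_distrib)
qed

definition lap_phi_chart :: "(real \<Rightarrow> real) \<Rightarrow> (real \<times> real \<Rightarrow> real^3) \<Rightarrow> (real \<times> real \<Rightarrow> real) \<Rightarrow> real \<times> real \<Rightarrow> real"
  where "lap_phi_chart \<phi> X g q = lap_local X g q + tgrad X (\<lambda>r. \<phi> (X r \<bullet> e3)) q \<bullet> tgrad X g q"

lemma lap_phi_local_eq_chart: "lap_phi_local \<phi> F x u q = lap_phi_chart \<phi> (F \<circ> x) (u \<circ> x) q"
  by (simp add: lap_phi_local_def lap_phi_chart_def o_def)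

lemma tgrad_cmult:
  assumes "pd1 g q = c * pd1 h q" "pd2 g q = c * pd2 h q"
  shows "tgrad X g q = c *\<^sub>R tgrad X h q"
  unfolding tgrad_def Let_def assms by (simp add: algebra_simps scaleR_add_right)

lemma pd_phi_height:
  assumes "Ck_on (Suc k) V X" "z \<in> V" "\<phi> differentiable (at (X z \<bullet> e3))"
  shows "pd1 (\<lambda>r. \<phi> (X r \<bullet> e3)) z = deriv \<phi> (X z \<bullet> e3) * (pd1 X z \<bullet> e3)"
    "pd2 (\<lambda>r. \<phi> (X r \<bullet> e3)) z = deriv \<phi> (X z \<bullet> e3) * (pd2 X z \<bullet> e3)"
proof -
  have d: "(\<phi> has_real_derivative deriv \<phi> (X z \<bullet> e3)) (at (X z \<bullet> e3))"
    using assms(3) DERIV_deriv_iff_real_differentiable by blast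
  show "pd1 (\<lambda>r. \<phi> (X r \<bullet> e3)) z = deriv \<phi> (X z \<bullet> e3) * (pd1 X z \<bullet> e3)"
    "pd2 (\<lambda>r. \<phi> (X r \<bullet> e3)) z = deriv \<phi> (X z \<bullet> e3) * (pd2 X z \<bullet> e3)"
    using has_dir_deriv_chain[OF d has_dir_deriv_inner[OF Ck_on_Suc_has_dir_deriv(1)[OF assms(1,2)]]]
      has_dir_deriv_chain[OF d has_dir_deriv_inner[OF Ck_on_Suc_has_dir_deriv(2)[OF assms(1,2)]]]
    by (auto intro: has_dir_deriv_imp_pd1 has_dir_deriv_imp_pd2)
qed

lemma lap_phi_chart_linear:
  assumes V: "open V" and X: "Ck_on 2 V X" and q: "q \<in> V" and n: "unit_normal_at X n q"
    and \<phi>: "\<phi> differentiable (at (X q \<bullet> e3))"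
    and H: "mean_curv_vec X n q = (deriv \<phi> (X q \<bullet> e3) * (n \<bullet> e3)) *\<^sub>R n"
  shows "lap_phi_chart \<phi> X (\<lambda>z. X z \<bullet> a) q = deriv \<phi> (X q \<bullet> e3) * (e3 \<bullet> a)"
proof -
  have X1: "Ck_on (Suc 1) V X" using X by (simp add: numeral_2_eq_2)
  have "tgrad X (\<lambda>r. \<phi> (X r \<bullet> e3)) q = deriv \<phi> (X q \<bullet> e3) *\<^sub>R tgrad X (\<lambda>z. X z \<bullet> e3) q"
    by (rule tgrad_cmult) (simp_all add: pd_phi_height[OF X1 q \<phi>] pd_inner[OF X1 q])
  then have tP: "tgrad X (\<lambda>r. \<phi> (X r \<bullet> e3)) q = deriv \<phi> (X q \<bullet> e3) *\<^sub>R (e3 - (e3 \<bullet> n) *\<^sub>R n)"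
    unfolding tgrad_linear[OF n X1 q] .
  have ip: "(e3 - (e3 \<bullet> n) *\<^sub>R n) \<bullet> (a - (a \<bullet> n) *\<^sub>R n) = e3 \<bullet> a - (e3 \<bullet> n) * (a \<bullet> n)"
    using n by (simp add: unit_normal_at_def inner_diff_left inner_diff_right inner_commute)
  show ?thesis
    unfolding lap_phi_chart_def lap_local_linear[OF V X q n] H tgrad_linear[OF n X1 q] tP
    by (simp only: inner_scaleR_left ip) (simp add: algebra_simps inner_commute)
qed

definition metric_E :: "(real \<times> real \<Rightarrow> real^3) \<Rightarrow> real \<times> real \<Rightarrow> real"
  where "metric_E X z = pd1 X z \<bullet> pd1 X z"

definition metric_F :: "(real \<times> real \<Rightarrow> real^3) \<Rightarrow> real \<times> real \<Rightarrow> real"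
  where "metric_F X z = pd1 X z \<bullet> pd2 X z"

definition metric_G :: "(real \<times> real \<Rightarrow> real^3) \<Rightarrow> real \<times> real \<Rightarrow> real"
  where "metric_G X z = pd2 X z \<bullet> pd2 X z"

lemma metric_det_eq: "metric_det X z = metric_E X z * metric_G X z - (metric_F X z)\<^sup>2"
  by (simp add: metric_det_def metric_E_def metric_F_def metric_G_def)

definition grad_frame1 :: "(real \<times> real \<Rightarrow> real^3) \<Rightarrow> real \<times> real \<Rightarrow> real^3"
  where "grad_frame1 X z = (metric_G X z / metric_det X z) *\<^sub>R pd1 X z - (metric_F X z / metric_det X z) *\<^sub>R pd2 X z"

definition grad_frame2 :: "(real \<times> real \<Rightarrow> real^3) \<Rightarrow> real \<times> real \<Rightarrow> real^3"
  where "grad_frame2 X z = (metric_E X z / metric_det X z) *\<^sub>R pd2 X z - (metric_F X z / metric_det X z) *\<^sub>R pd1 X z"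

lemma tgrad_eq_grad_frame: "tgrad X g z = pd1 g z *\<^sub>R grad_frame1 X z + pd2 g z *\<^sub>R grad_frame2 X z"
  unfolding tgrad_def Let_def grad_frame1_def grad_frame2_def metric_E_def metric_F_def metric_G_def
    metric_det_def
  by (simp add: algebra_simps diff_divide_distrib add_divide_distrib)

definition hessian_trace_num :: "(real \<times> real \<Rightarrow> real^3) \<Rightarrow> real \<times> real \<Rightarrow> real^3"
  where "hessian_trace_num X z = metric_G X z *\<^sub>R pd1 (pd1 X) z - (2 * metric_F X z) *\<^sub>R pd2 (pd1 X) z
    + metric_E X z *\<^sub>R pd2 (pd2 X) z"

text \<open>The first-order coefficients of \<open>\<Delta>\<^sup>\<phi>\<close> in a chart: the drift \<open>\<nabla>(\<phi> \<circ> \<mu>)\<close> minus the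
  contraction \<open>g\<^sup>i\<^sup>j \<Gamma>\<^sup>k\<^sub>i\<^sub>j\<close> of the Christoffel symbols.\<close>

definition drift1 :: "(real \<Rightarrow> real) \<Rightarrow> (real \<times> real \<Rightarrow> real^3) \<Rightarrow> real \<times> real \<Rightarrow> real"
  where "drift1 \<phi> X z = tgrad X (\<lambda>r. \<phi> (X r \<bullet> e3)) z \<bullet> grad_frame1 X z
    - (hessian_trace_num X z \<bullet> grad_frame1 X z) / metric_det X z"

definition drift2 :: "(real \<Rightarrow> real) \<Rightarrow> (real \<times> real \<Rightarrow> real^3) \<Rightarrow> real \<times> real \<Rightarrow> real"
  where "drift2 \<phi> X z = tgrad X (\<lambda>r. \<phi> (X r \<bullet> e3)) z \<bullet> grad_frame2 X z
    - (hessian_trace_num X z \<bullet> grad_frame2 X z) / metric_det X z"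

lemma lap_phi_chart_eq_elliptic_op:
  assumes D: "metric_det X z \<noteq> 0"
  shows "lap_phi_chart \<phi> X g z
    = elliptic_op (metric_E X) (metric_F X) (metric_G X) (drift1 \<phi> X) (drift2 \<phi> X) g z"
proof -
  have alg: "(G * (a11 - (g1 * x1 + g2 * x2)) - 2 * F * (a12 - (g1 * y1 + g2 * y2))
        + E * (a22 - (g1 * z1 + g2 * z2))) / D + (g1 * t1 + g2 * t2)
      = (G * a11 - 2 * F * a12 + E * a22) / D + (t1 - (G * x1 - 2 * F * y1 + E * z1) / D) * g1
        + (t2 - (G * x2 - 2 * F * y2 + E * z2) / D) * g2"
    if "D \<noteq> 0" for G F E D a11 a12 a22 g1 g2 x1 x2 y1 y2 z1 z2 t1 t2 :: real
    using that by (simp add: field_simps)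
  define T where "T = tgrad X g z"
  have i: "v \<bullet> T = pd1 g z * (v \<bullet> grad_frame1 X z) + pd2 g z * (v \<bullet> grad_frame2 X z)" for v
    unfolding T_def tgrad_eq_grad_frame by (simp add: inner_add_right)
  have "lap_phi_chart \<phi> X g z = (metric_G X z * (pd1 (pd1 g) z - pd1 (pd1 X) z \<bullet> T)
      - 2 * metric_F X z * (pd2 (pd1 g) z - pd2 (pd1 X) z \<bullet> T)
      + metric_E X z * (pd2 (pd2 g) z - pd2 (pd2 X) z \<bullet> T)) / metric_det X z
      + tgrad X (\<lambda>r. \<phi> (X r \<bullet> e3)) z \<bullet> T"
    unfolding lap_phi_chart_def lap_local_def Let_def T_def metric_E_def metric_F_def metric_G_def
      metric_det_def ..
  also have "\<dots> = elliptic_op (metric_E X) (metric_F X) (metric_G X) (drift1 \<phi> X) (drift2 \<phi> X) g z"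
    unfolding i elliptic_op_def drift1_def drift2_def hessian_trace_num_def metric_det_eq[symmetric]
    by (simp add: inner_add_left inner_diff_left alg[OF D])
  finally show ?thesis .
qed

lemma continuous_on_div_metric_det:
  assumes "Ck_on 2 V X" "\<And>z. z \<in> V \<Longrightarrow> metric_det X z > 0" "continuous_on V h"
  shows "continuous_on V (\<lambda>z. h z / metric_det X z)"
proof (rule continuous_on_divide[OF assms(3)])
  have "continuous_on V (pd1 X)" "continuous_on V (pd2 X)" using assms(1) by (simp_all add: numeral_2_eq_2)
  then show "continuous_on V (metric_det X)" unfolding metric_det_def[abs_def] by (intro continuous_intros)
qed (use assms(2) in force)

lemma continuous_on_metric_coeffs:
  assumes X: "Ck_on 2 V X" and D: "\<And>z. z \<in> V \<Longrightarrow> metric_det X z > 0"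
  shows "continuous_on V (metric_E X)" "continuous_on V (metric_F X)" "continuous_on V (metric_G X)"
    "continuous_on V (grad_frame1 X)" "continuous_on V (grad_frame2 X)"
    "continuous_on V (hessian_trace_num X)"
proof -
  have c: "continuous_on V X" "continuous_on V (pd1 X)" "continuous_on V (pd2 X)"
    "continuous_on V (pd1 (pd1 X))" "continuous_on V (pd2 (pd1 X))" "continuous_on V (pd2 (pd2 X))"
    using X by (simp_all add: numeral_2_eq_2)
  show cE: "continuous_on V (metric_E X)" unfolding metric_E_def[abs_def] using c by (intro continuous_intros)
  show cF: "continuous_on V (metric_F X)" unfolding metric_F_def[abs_def] using c by (intro continuous_intros)
  show cG: "continuous_on V (metric_G X)" unfolding metric_G_def[abs_def] using c by (intro continuous_intros)
  note quot = continuous_on_div_metric_det[OF X D]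
  show "continuous_on V (grad_frame1 X)"
    unfolding grad_frame1_def[abs_def] by (intro continuous_on_diff continuous_on_scaleR quot c cF cG)
  show "continuous_on V (grad_frame2 X)"
    unfolding grad_frame2_def[abs_def] by (intro continuous_on_diff continuous_on_scaleR quot c cE cF)
  show "continuous_on V (hessian_trace_num X)"
    unfolding hessian_trace_num_def[abs_def] using c cE cF cG by (intro continuous_intros)
qed

lemma elliptic_coeffs_on_chart:
  assumes X: "Ck_on 2 V X" and D: "\<And>z. z \<in> V \<Longrightarrow> metric_det X z > 0"
    and \<phi>: "\<And>x. \<phi> differentiable (at x)" "continuous_on UNIV (deriv \<phi>)"
  shows "elliptic_coeffs_on V (metric_E X) (metric_F X) (metric_G X) (drift1 \<phi> X) (drift2 \<phi> X)"
proof -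
  note c = continuous_on_metric_coeffs[OF X D]
  have X1: "Ck_on (Suc 1) V X" using X by (simp add: numeral_2_eq_2)
  have cd: "continuous_on V (\<lambda>z. deriv \<phi> (X z \<bullet> e3))"
    by (rule continuous_on_compose2[OF \<phi>(2) _ subset_UNIV])
      (use Ck_on_imp_continuous_on[OF X] in \<open>intro continuous_intros\<close>)
  have cX: "continuous_on V (pd1 X)" "continuous_on V (pd2 X)" using X by (simp_all add: numeral_2_eq_2)
  have cP: "continuous_on V (\<lambda>z. tgrad X (\<lambda>r. \<phi> (X r \<bullet> e3)) z)"
  proof (rule continuous_on_cong[THEN iffD2, OF refl, rotated])
    show "tgrad X (\<lambda>r. \<phi> (X r \<bullet> e3)) z = (deriv \<phi> (X z \<bullet> e3) * (pd1 X z \<bullet> e3)) *\<^sub>R grad_frame1 X z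
      + (deriv \<phi> (X z \<bullet> e3) * (pd2 X z \<bullet> e3)) *\<^sub>R grad_frame2 X z" if "z \<in> V" for z
      unfolding tgrad_eq_grad_frame pd_phi_height[OF X1 that \<phi>(1)] ..
  qed (use cd cX c in \<open>intro continuous_intros\<close>)
  note quot = continuous_on_div_metric_det[OF X D]
  have "continuous_on V (drift1 \<phi> X)"
    unfolding drift1_def[abs_def] by (intro continuous_on_diff continuous_on_inner quot cP c(4,6))
  moreover have "continuous_on V (drift2 \<phi> X)"
    unfolding drift2_def[abs_def] by (intro continuous_on_diff continuous_on_inner quot cP c(5,6))
  moreover have "metric_E X z > 0 \<and> metric_G X z > 0 \<and> metric_E X z * metric_G X z - (metric_F X z)\<^sup>2 > 0"
    if "z \<in> V" for z
  proof -
    have d: "metric_E X z * metric_G X z - (metric_F X z)\<^sup>2 > 0" using D[OF that] by (simp add: metric_det_eq)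
    moreover have "metric_E X z \<ge> 0" "metric_G X z \<ge> 0" by (simp_all add: metric_E_def metric_G_def)
    moreover have "metric_E X z * metric_G X z > 0" using d zero_le_power2[of "metric_F X z"] by linarith
    ultimately show ?thesis by (auto simp: zero_less_mult_iff)
  qed
  ultimately show ?thesis using c(1-3) unfolding elliptic_coeffs_on_def by blast
qed

lemma tgrad_norm_sq:
  assumes "metric_det X q \<noteq> 0"
  shows "tgrad X g q \<bullet> tgrad X g q = (metric_G X q * (pd1 g q)\<^sup>2 - 2 * metric_F X q * pd1 g q * pd2 g q
    + metric_E X q * (pd2 g q)\<^sup>2) / (metric_E X q * metric_G X q - (metric_F X q)\<^sup>2)"
proof -
  define E F G where "E = metric_E X q" and "F = metric_F X q" and "G = metric_G X q"
  define \<beta>1 \<beta>2 where "\<beta>1 = (G * pd1 g q - F * pd2 g q) / (E * G - F\<^sup>2)"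
    and "\<beta>2 = (E * pd2 g q - F * pd1 g q) / (E * G - F\<^sup>2)"
  have D: "E * G - F\<^sup>2 \<noteq> 0" using assms by (simp add: metric_det_eq E_def F_def G_def)
  have "tgrad X g q = \<beta>1 *\<^sub>R pd1 X q + \<beta>2 *\<^sub>R pd2 X q"
    unfolding tgrad_def Let_def \<beta>1_def \<beta>2_def E_def F_def G_def metric_E_def metric_F_def metric_G_def ..
  then have "tgrad X g q \<bullet> tgrad X g q = \<beta>1 * (\<beta>1 * E + \<beta>2 * F) + \<beta>2 * (\<beta>1 * F + \<beta>2 * G)"
    by (simp add: E_def F_def G_def metric_E_def metric_F_def metric_G_def inner_add_left inner_add_right
        inner_commute algebra_simps)
  also have "\<dots> = \<beta>1 * pd1 g q + \<beta>2 * pd2 g q"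
    using dual_basis_coeffs[OF D, of "pd1 g q" "pd2 g q"] by (simp add: \<beta>1_def \<beta>2_def)
  also have "\<dots> = (G * (pd1 g q)\<^sup>2 - 2 * F * pd1 g q * pd2 g q + E * (pd2 g q)\<^sup>2) / (E * G - F\<^sup>2)"
    unfolding \<beta>1_def \<beta>2_def by (simp add: power2_eq_square algebra_simps add_divide_distrib diff_divide_distrib)
  finally show ?thesis by (simp add: E_def F_def G_def)
qed

lemma lap_phi_chart_exp:
  assumes "open V" "Ck_on 2 V f" "q \<in> V" "metric_det X q \<noteq> 0"
  shows "lap_phi_chart \<phi> X (\<lambda>z. exp (f z)) q = exp (f q) * (lap_phi_chart \<phi> X f q + tgrad X f q \<bullet> tgrad X f q)"
  unfolding lap_phi_chart_eq_elliptic_op[OF assms(4)] elliptic_op_exp[OF assms(1-3)] tgrad_norm_sq[OF assms(4)] ..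

lemma clopen_eq_UNIV:
  fixes M :: "'m::topological_space set"
  assumes "connected (UNIV :: 'm set)" "open M" "closed M" "M \<noteq> {}"
  shows "M = UNIV"
  using connectedD[OF assms(1) assms(2) open_Compl[OF assms(3)]] assms(4) by auto

lemma not_divergent_imp_convergent_subseq:
  fixes p :: "nat \<Rightarrow> 'm::first_countable_topology"
  assumes "\<not> divergent_seq p"
  obtains l r where "strict_mono r" "(p \<circ> r) \<longlonglongrightarrow> l"
proof -
  obtain K where K: "compact K" "\<not> (\<forall>\<^sub>F n in sequentially. p n \<notin> K)"
    using assms unfolding divergent_seq_def by blast
  then have "infinite {n. p n \<in> K}"
    unfolding eventually_sequentially infinite_nat_iff_unbounded_le by auto
  then have r1: "strict_mono (enumerate {n. p n \<in> K})" "\<And>n. p (enumerate {n. p n \<in> K} n) \<in> K"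
    using strict_mono_enumerate enumerate_in_set by blast+
  obtain l r2 where "strict_mono r2" "((p \<circ> enumerate {n. p n \<in> K}) \<circ> r2) \<longlonglongrightarrow> l"
    using compact_imp_seq_compact[OF K(1)] r1(2) unfolding seq_compact_def by (metis comp_apply)
  then show ?thesis using that r1(1) strict_mono_o by (metis comp_assoc)
qed

lemma maximizing_seq_tendsto:
  fixes a :: "nat \<Rightarrow> real"
  assumes "\<And>n. S - 1 / real (Suc n) < a n" "\<And>n. a n \<le> S"
  shows "a \<longlonglongrightarrow> S"
proof (rule tendsto_sandwich[of "\<lambda>n. S - 1 / real (Suc n)" _ _ "\<lambda>n. S"])
  show "\<forall>\<^sub>F n in sequentially. S - 1 / real (Suc n) \<le> a n" "\<forall>\<^sub>F n in sequentially. a n \<le> S"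
    using assms by (simp_all add: less_imp_le)
  have "(\<lambda>n. 1 / real (Suc n)) \<longlonglongrightarrow> 0" using LIMSEQ_Suc[OF lim_const_over_n[of 1]] by simp
  then show "(\<lambda>n. S - 1 / real (Suc n)) \<longlonglongrightarrow> S"
    using tendsto_diff[OF tendsto_const, of _ 0 sequentially S] by simp
qed simp

lemma exists_maximizing_seq:
  fixes h :: "'m \<Rightarrow> real"
  assumes "bdd_above (range h)"
  obtains p where "\<And>n. Sup (range h) - 1 / real (Suc n) < h (p n)"
proof -
  have "\<forall>n. \<exists>y. Sup (range h) - 1 / real (Suc n) < h y"
  proof
    fix n
    have "Sup (range h) - 1 / real (Suc n) < Sup (range h)" by simp
    then show "\<exists>y. Sup (range h) - 1 / real (Suc n) < h y" using less_cSupE[of _ "range h"] by blast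
  qed
  then show ?thesis using that by (metis choice)
qed

lemma maximizing_seq_divergent:
  fixes h :: "'m::{t2_space, first_countable_topology} \<Rightarrow> real"
  assumes hc: "continuous_on UNIV h" and bd: "bdd_above (range h)"
    and p: "\<And>n. Sup (range h) - 1 / real (Suc n) < h (p n)"
    and no_max: "\<not> (\<exists>l. \<forall>y. h y \<le> h l)"
  shows "divergent_seq p"
proof (rule ccontr)
  assume "\<not> divergent_seq p"
  then obtain l r where r: "strict_mono r" and l: "(p \<circ> r) \<longlonglongrightarrow> l"
    by (rule not_divergent_imp_convergent_subseq)
  have le: "h y \<le> Sup (range h)" for y using bd by (simp add: cSup_upper)
  have "(\<lambda>n. h (p n)) \<longlonglongrightarrow> Sup (range h)" by (rule maximizing_seq_tendsto[OF p le])
  then have "(\<lambda>n. h (p (r n))) \<longlonglongrightarrow> Sup (range h)"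
    using LIMSEQ_subseq_LIMSEQ[OF _ r] by (simp add: o_def)
  moreover have "isCont h l" using hc continuous_on_eq_continuous_at by blast
  then have "(\<lambda>n. h (p (r n))) \<longlonglongrightarrow> h l" using isCont_tendsto_compose l by (simp add: o_def)
  ultimately have "h l = Sup (range h)" by (rule LIMSEQ_unique[rotated])
  with le no_max show False by (metis (no_types))
qed

lemma normal_e3_bound:
  fixes n v :: "real^3"
  assumes n: "n \<bullet> n = 1" and v: "v \<bullet> e3 = 0" "v \<noteq> 0"
  shows "(n \<bullet> e3)\<^sup>2 * (v \<bullet> v) \<le> v \<bullet> v - (n \<bullet> v)\<^sup>2"
proof -
  have e: "e3 \<bullet> e3 = 1" unfolding e3_def by (simp add: inner_axis_axis)
  have vv: "v \<bullet> v > 0" using v(2) by simp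
  define a b where "a = n \<bullet> e3" and "b = (n \<bullet> v) / (v \<bullet> v)"
  have sq: "(n - A - B) \<bullet> (n - A - B) = n \<bullet> n - 2 * (n \<bullet> A) - 2 * (n \<bullet> B) + A \<bullet> A + 2 * (A \<bullet> B) + B \<bullet> B"
    for A B :: "real^3" by (simp add: inner_diff_left inner_diff_right inner_commute algebra_simps)
  have "0 \<le> (n - a *\<^sub>R e3 - b *\<^sub>R v) \<bullet> (n - a *\<^sub>R e3 - b *\<^sub>R v)" by simp
  also have "\<dots> = 1 - a * a - 2 * (b * (n \<bullet> v)) + b * b * (v \<bullet> v)"
    unfolding sq using n e v(1) by (simp add: a_def inner_commute algebra_simps)
  also have "\<dots> = 1 - (n \<bullet> e3)\<^sup>2 - (n \<bullet> v)\<^sup>2 / (v \<bullet> v)"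
    using vv by (simp add: a_def b_def power2_eq_square)
  finally have "0 \<le> (v \<bullet> v) * (1 - (n \<bullet> e3)\<^sup>2 - (n \<bullet> v)\<^sup>2 / (v \<bullet> v))" using vv by simp
  also have "\<dots> = v \<bullet> v - (n \<bullet> e3)\<^sup>2 * (v \<bullet> v) - (n \<bullet> v)\<^sup>2" using vv by (simp add: field_simps)
  finally show ?thesis by simp
qed

lemma tendsto_zero_if_product_bound:
  fixes a b :: "nat \<Rightarrow> real"
  assumes a: "a \<longlonglongrightarrow> W" "W > 0" and b: "\<And>n. 0 \<le> b n" "\<And>n. a n * b n < 1 / real (Suc n)"
  shows "b \<longlonglongrightarrow> 0"
proof (rule tendsto_sandwich[of "\<lambda>n. 0" _ _ "\<lambda>n. 2 / W * (1 / real (Suc n))"])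
  have "\<forall>\<^sub>F n in sequentially. W / 2 < a n" using order_tendstoD(1)[OF a(1), of "W / 2"] a(2) by simp
  then show "\<forall>\<^sub>F n in sequentially. b n \<le> 2 / W * (1 / real (Suc n))"
  proof eventually_elim
    case (elim n)
    then have "W / 2 * b n \<le> a n * b n" using b(1)[of n] by (intro mult_right_mono) simp_all
    with b(2)[of n] have "W / 2 * b n \<le> 1 / real (Suc n)" by simp
    then have "2 / W * (W / 2 * b n) \<le> 2 / W * (1 / real (Suc n))"
      using a(2) by (intro mult_left_mono) simp_all
    with a(2) show ?case by simp
  qed
  have "(\<lambda>n. 1 / real (Suc n)) \<longlonglongrightarrow> 0" using LIMSEQ_Suc[OF lim_const_over_n[of 1]] by simp
  then show "(\<lambda>n. 2 / W * (1 / real (Suc n))) \<longlonglongrightarrow> 0" using tendsto_mult_right_zero by blast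
qed (use b(1) in simp_all)

lemma tendsto_zero_if_sq_bound:
  fixes b c :: "nat \<Rightarrow> real"
  assumes "b \<longlonglongrightarrow> 0" "K > 0" "\<And>n. (c n)\<^sup>2 * K \<le> b n"
  shows "c \<longlonglongrightarrow> 0"
proof -
  have "(\<lambda>n. b n / K) \<longlonglongrightarrow> 0" by (rule tendsto_divide_zero[OF assms(1)])
  then have "(\<lambda>n. (c n)\<^sup>2) \<longlonglongrightarrow> 0"
    by (rule tendsto_sandwich[rotated 2, OF tendsto_const])
      (use assms(2,3) in \<open>simp_all add: pos_le_divide_eq\<close>)
  then have "(\<lambda>n. sqrt ((c n)\<^sup>2)) \<longlonglongrightarrow> sqrt 0" by (rule tendsto_real_sqrt)
  then show ?thesis by (simp add: tendsto_rabs_zero_iff)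
qed

section \<open>[\<phi>, e3]-minimal surfaces\<close>

locale phi_minimal_surface =
  fixes A :: "((real \<times> real) set \<times> (real \<times> real \<Rightarrow> 'm::{t2_space, first_countable_topology})) set"
    and F :: "'m \<Rightarrow> real^3" and N :: "'m \<Rightarrow> real^3" and \<phi> :: "real \<Rightarrow> real"
  assumes smooth: "smooth_real \<phi>" and atlas: "surface_atlas A" and immersion: "immersion A F"
    and normal: "unit_normal A F N" and minimal: "phi_e3_minimal A F N \<phi>"
begin

lemma phi_differentiable: "\<phi> differentiable (at x)"
  using smooth unfolding smooth_real_def by (metis funpow_0)

lemma deriv_phi_continuous: "continuous_on UNIV (deriv \<phi>)"
proof -
  have "((deriv ^^ Suc 0) \<phi>) differentiable (at x)" for x
    using smooth unfolding smooth_real_def by blast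
  then show ?thesis by (simp add: differentiable_imp_continuous_within continuous_at_imp_continuous_on)
qed

lemma N_unit: "N p \<bullet> N p = 1"
  using normal unfolding unit_normal_def by (simp add: norm_eq_1)

lemma chart_props:
  assumes "(V, x) \<in> A"
  shows "open V" "open (x ` V)" "inj_on x V" "continuous_on (x ` V) (inv_into V x)" "Ck_on k V (F \<circ> x)"
  using assms atlas immersion unfolding surface_atlas_def immersion_def smooth2_on_def by fast+

lemma chart_unit_normal:
  assumes "(V, x) \<in> A" "q \<in> V"
  shows "unit_normal_at (F \<circ> x) (N (x q)) q" "metric_det (F \<circ> x) q > 0"
proof -
  show pos: "metric_det (F \<circ> x) q > 0"
    using immersion assms unfolding immersion_def metric_det_def by (fast intro: metric_det_pos_if_inj)
  show "unit_normal_at (F \<circ> x) (N (x q)) q"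
    using normal assms pos N_unit unfolding unit_normal_def unit_normal_at_def by fastforce
qed

lemma chart_mean_curv:
  "(V, x) \<in> A \<Longrightarrow> q \<in> V \<Longrightarrow>
     mean_curv_vec (F \<circ> x) (N (x q)) q = (deriv \<phi> ((F \<circ> x) q \<bullet> e3) * (N (x q) \<bullet> e3)) *\<^sub>R N (x q)"
  using minimal unfolding phi_e3_minimal_def by fastforce

lemma obtain_chart:
  obtains V x q where "(V, x) \<in> A" "q \<in> V" "x q = p"
proof -
  have "p \<in> (\<Union>(V, x)\<in>A. x ` V)" using atlas unfolding surface_atlas_def by blast
  then show ?thesis using that by blast
qed

lemma continuous_on_if_charts:
  assumes "\<And>V x. (V, x) \<in> A \<Longrightarrow> continuous_on V (h \<circ> x)"
  shows "continuous_on UNIV h"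
proof -
  have "isCont h p" for p
  proof -
    obtain V x q where Vx: "(V, x) \<in> A" "q \<in> V" "x q = p" by (rule obtain_chart)
    note c = chart_props[OF Vx(1)]
    have "continuous_on (x ` V) (\<lambda>z. (h \<circ> x) (inv_into V x z))"
      by (rule continuous_on_compose2[OF assms[OF Vx(1)] c(4)]) (auto simp: inv_into_into)
    then have "continuous_on (x ` V) h"
      by (rule continuous_on_cong[THEN iffD1, OF refl, rotated]) (simp add: f_inv_into_f)
    then show ?thesis using c(2) Vx continuous_on_eq_continuous_at by blast
  qed
  then show ?thesis by (simp add: continuous_at_imp_continuous_on)
qed

lemma open_chart_image:
  assumes "(V, x) \<in> A" "open B" "B \<subseteq> V"
  shows "open (x ` B)"
proof -
  note c = chart_props[OF assms(1)]
  have "inv_into V x -` B \<inter> x ` V = x ` B"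
    using assms(3) c(3) by (auto simp: inv_into_f_f f_inv_into_f intro!: image_eqI)
  with continuous_on_open_vimage[OF c(2)] c(4) assms(2) show ?thesis by metis
qed

lemma continuous_F: "continuous_on UNIV F"
  by (rule continuous_on_if_charts) (use chart_props(5)[of _ _ 0] in simp)

lemma tgrad_height:
  assumes "(V, x) \<in> A" "q \<in> V"
  shows "tgrad (F \<circ> x) (\<lambda>z. (F \<circ> x) z \<bullet> a) q = a - (a \<bullet> N (x q)) *\<^sub>R N (x q)"
  by (rule tgrad_linear[OF chart_unit_normal(1)[OF assms] chart_props(5)[OF assms(1), of "Suc 0"] assms(2)])

lemma lap_phi_horizontal_height:
  assumes "(V, x) \<in> A" "q \<in> V" "a \<bullet> e3 = 0"
  shows "lap_phi_chart \<phi> (F \<circ> x) (\<lambda>z. (F \<circ> x) z \<bullet> a) q = 0"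
  using lap_phi_chart_linear[OF chart_props(1,5)[OF assms(1)] assms(2) chart_unit_normal(1)[OF assms(1,2)]
      phi_differentiable chart_mean_curv[OF assms(1,2)]] assms(3)
  by (simp add: inner_commute)

lemma height_max_imp_normal_parallel:
  assumes max: "\<And>p. F p \<bullet> a \<le> F l \<bullet> a"
  shows "a = (a \<bullet> N l) *\<^sub>R N l"
proof -
  obtain V x q where Vx: "(V, x) \<in> A" "q \<in> V" "x q = l" by (rule obtain_chart)
  have "Ck_on (Suc 0) V (\<lambda>z. (F \<circ> x) z \<bullet> a)"
    by (rule Ck_on_inner[OF chart_props(1,5)[OF Vx(1)]])
  moreover have "(F \<circ> x) z \<bullet> a \<le> (F \<circ> x) q \<bullet> a" for z using max Vx(3) by simp
  ultimately have "pd1 (\<lambda>z. (F \<circ> x) z \<bullet> a) q = 0" "pd2 (\<lambda>z. (F \<circ> x) z \<bullet> a) q = 0"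
    using local_max_imp_pd_zero[OF chart_props(1)[OF Vx(1)] _ Vx(2)] by blast+
  then have "tgrad (F \<circ> x) (\<lambda>z. (F \<circ> x) z \<bullet> a) q = 0"
    by (simp add: tgrad_eq_grad_frame)
  with tgrad_height[OF Vx(1,2)] Vx(3) show ?thesis by simp
qed

lemma horizontal_height_max_imp_const:
  assumes conn: "connected (UNIV :: 'm set)" and v: "v \<bullet> e3 = 0" and max: "\<And>p. F p \<bullet> v \<le> F l \<bullet> v"
  shows "F p \<bullet> v = F l \<bullet> v"
proof -
  define M where "M = {p. F p \<bullet> v = F l \<bullet> v}"
  have "continuous_on UNIV (\<lambda>p. F p \<bullet> v)" using continuous_F by (intro continuous_intros)
  from continuous_closed_preimage_constant[OF this closed_UNIV] have "closed M"
    by (simp add: M_def)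
  moreover have "open M"
  proof (subst open_subopen, intro ballI)
    fix p assume "p \<in> M"
    obtain V x q where Vx: "(V, x) \<in> A" "q \<in> V" "x q = p" by (rule obtain_chart)
    note V = chart_props(1)[OF Vx(1)] and X = chart_props(5)[OF Vx(1), of 2]
    have f: "Ck_on 2 V (\<lambda>z. (F \<circ> x) z \<bullet> v)" by (rule Ck_on_inner[OF V X])
    have "elliptic_op (metric_E (F \<circ> x)) (metric_F (F \<circ> x)) (metric_G (F \<circ> x))
        (drift1 \<phi> (F \<circ> x)) (drift2 \<phi> (F \<circ> x)) (\<lambda>z. (F \<circ> x) z \<bullet> v) z \<ge> 0" if "z \<in> V" for z
      using lap_phi_horizontal_height[OF Vx(1) that v] chart_unit_normal(2)[OF Vx(1) that]
      by (simp add: lap_phi_chart_eq_elliptic_op)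
    with elliptic_strong_max_local[OF V elliptic_coeffs_on_chart[OF X chart_unit_normal(2)[OF Vx(1)]
        phi_differentiable deriv_phi_continuous] f, of "F l \<bullet> v" q] max Vx \<open>p \<in> M\<close>
    obtain r where r: "r > 0" "\<And>z. z \<in> ball q r \<Longrightarrow> (F \<circ> x) z \<bullet> v = F l \<bullet> v"
      by (auto simp: M_def)
    have "open (x ` (ball q r \<inter> V))" by (rule open_chart_image[OF Vx(1)]) (use V in auto)
    moreover have "p \<in> x ` (ball q r \<inter> V)" using Vx r(1) by auto
    moreover have "x ` (ball q r \<inter> V) \<subseteq> M" using r(2) by (auto simp: M_def)
    ultimately show "\<exists>T. open T \<and> p \<in> T \<and> T \<subseteq> M" by blast
  qed
  moreover have "l \<in> M" by (simp add: M_def)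
  ultimately have "M = UNIV" using clopen_eq_UNIV[OF conn] by blast
  then show ?thesis by (auto simp: M_def)
qed

lemma lap_phi_exp_height:
  assumes Vx: "(V, x) \<in> A" and q: "q \<in> V" and v: "v \<bullet> e3 = 0"
  shows "lap_phi_local \<phi> F x (\<lambda>p. exp (F p \<bullet> v)) q = exp (F (x q) \<bullet> v) * (v \<bullet> v - (v \<bullet> N (x q))\<^sup>2)"
proof -
  note V = chart_props(1)[OF Vx]
  have "lap_phi_local \<phi> F x (\<lambda>p. exp (F p \<bullet> v)) q = lap_phi_chart \<phi> (F \<circ> x) (\<lambda>z. exp ((F \<circ> x) z \<bullet> v)) q"
    by (simp add: lap_phi_local_eq_chart o_def)
  also have "\<dots> = exp ((F \<circ> x) q \<bullet> v) * (lap_phi_chart \<phi> (F \<circ> x) (\<lambda>z. (F \<circ> x) z \<bullet> v) q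
      + tgrad (F \<circ> x) (\<lambda>z. (F \<circ> x) z \<bullet> v) q \<bullet> tgrad (F \<circ> x) (\<lambda>z. (F \<circ> x) z \<bullet> v) q)"
    using chart_unit_normal(2)[OF Vx q]
    by (intro lap_phi_chart_exp[OF V Ck_on_inner[OF V chart_props(5)[OF Vx]] q]) simp
  also have "\<dots> = exp (F (x q) \<bullet> v) * (v \<bullet> v - (v \<bullet> N (x q))\<^sup>2)"
    unfolding lap_phi_horizontal_height[OF Vx q v] tgrad_height[OF Vx q] using N_unit[of "x q"]
    by (simp add: inner_diff_left inner_diff_right inner_commute power2_eq_square)
  finally show ?thesis .
qed

lemma planar_case:
  assumes v: "v \<noteq> 0" "v \<bullet> e3 = 0" and c: "\<And>p. F p \<bullet> v = c"
  obtains p where "divergent_seq p" "(\<lambda>n. N (p n) \<bullet> e3) \<longlonglongrightarrow> 0"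
proof -
  have nv: "v = (v \<bullet> N l) *\<^sub>R N l" for l by (rule height_max_imp_normal_parallel) (simp add: c)
  then have vN: "v \<bullet> N l \<noteq> 0" for l using v(1) by (metis scale_zero_left)
  have eta: "N l \<bullet> e3 = 0" for l
    using arg_cong[OF nv[of l], of "\<lambda>t. t \<bullet> e3"] v(2) vN[of l] by simp
  define a where "a = cross3 e3 v"
  have av: "a \<bullet> v = 0" unfolding a_def using dot_cross_self(3)[of e3 v] by simp
  have "(norm a)\<^sup>2 = (norm v)\<^sup>2"
    using norm_cross[of e3 v] v(2) by (simp add: a_def e3_def inner_commute)
  then have a0: "a \<noteq> 0" using v(1) by auto
  define g where "g p = arctan (F p \<bullet> a)" for p
  have gc: "continuous_on UNIV g" unfolding g_def[abs_def] using continuous_F by (intro continuous_intros)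
  have "g y \<le> pi / 2" for y using arctan_ubound[of "F y \<bullet> a"] by (simp add: g_def)
  then have gb: "bdd_above (range g)" by (intro bdd_aboveI[of _ "pi / 2"]) auto
  have "\<not> (\<exists>l. \<forall>y. g y \<le> g l)"
  proof
    assume "\<exists>l. \<forall>y. g y \<le> g l"
    then obtain l where "\<And>y. F y \<bullet> a \<le> F l \<bullet> a" by (auto simp: g_def arctan_le_iff)
    then have an: "a = (a \<bullet> N l) *\<^sub>R N l" by (rule height_max_imp_normal_parallel)
    have "a \<bullet> v = (a \<bullet> N l) * (v \<bullet> N l)"
      using arg_cong2[OF an nv[of l], of "(\<bullet>)"] N_unit[of l] by simp
    with av vN[of l] have "a \<bullet> N l = 0" by simp
    with an a0 show False by simp
  qed
  moreover obtain p where "\<And>n. Sup (range g) - 1 / real (Suc n) < g (p n)"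
    using exists_maximizing_seq[OF gb] by blast
  ultimately have "divergent_seq p" using maximizing_seq_divergent[OF gc gb] by blast
  with eta show ?thesis using that by simp
qed

lemma stoch_complete_exp_height_seq:
  assumes sc: "phi_stoch_complete A F \<phi>" and v: "v \<bullet> e3 = 0" and le: "\<And>p. F p \<bullet> v \<le> 0"
  obtains p where "\<And>n. Sup (range (\<lambda>p. exp (F p \<bullet> v))) - 1 / real (Suc n) < exp (F (p n) \<bullet> v)"
    "\<And>n. exp (F (p n) \<bullet> v) * (v \<bullet> v - (v \<bullet> N (p n))\<^sup>2) < 1 / real (Suc n)"
proof -
  define w where "w p = exp (F p \<bullet> v)" for p
  have "bdd_above (range w)" by (rule bdd_aboveI[of _ 1]) (auto simp: w_def le)
  moreover have "C2_surf A w"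
    unfolding C2_surf_def
  proof clarify
    fix V x assume "(V, x) \<in> A"
    from Ck_on_exp[OF chart_props(1)[OF this] Ck_on_inner[OF chart_props(1,5)[OF this]]]
    show "Ck_on 2 V (w \<circ> x)" by (simp add: w_def o_def)
  qed
  ultimately have "\<exists>p. \<forall>n. w (p n) > Sup (range w) - 1 / real (Suc n)
      \<and> (\<exists>(V, x)\<in>A. \<exists>q\<in>V. x q = p n \<and> lap_phi_local \<phi> F x w q < 1 / real (Suc n))"
    using sc unfolding phi_stoch_complete_def by blast
  then obtain p where P: "\<And>n. Sup (range w) - 1 / real (Suc n) < w (p n)"
    and L: "\<And>n. \<exists>(V, x)\<in>A. \<exists>q\<in>V. x q = p n \<and> lap_phi_local \<phi> F x w q < 1 / real (Suc n)"
    by blast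
  have "w (p n) * (v \<bullet> v - (v \<bullet> N (p n))\<^sup>2) < 1 / real (Suc n)" for n
  proof -
    obtain V x q where "(V, x) \<in> A" "q \<in> V" "x q = p n" "lap_phi_local \<phi> F x w q < 1 / real (Suc n)"
      using L[of n] by blast
    with lap_phi_exp_height[OF _ _ v] show ?thesis unfolding w_def[abs_def] by simp
  qed
  with P show ?thesis using that unfolding w_def[abs_def] by blast
qed

lemma nonplanar_case:
  assumes sc: "phi_stoch_complete A F \<phi>" and v: "v \<noteq> 0" "v \<bullet> e3 = 0" and le: "\<And>p. F p \<bullet> v \<le> 0"
    and no_max: "\<not> (\<exists>l. \<forall>p. F p \<bullet> v \<le> F l \<bullet> v)"
  obtains p where "divergent_seq p" "(\<lambda>n. N (p n) \<bullet> e3) \<longlonglongrightarrow> 0"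
proof -
  define w where "w p = exp (F p \<bullet> v)" for p
  obtain p where P: "\<And>n. Sup (range w) - 1 / real (Suc n) < w (p n)"
    and bound: "\<And>n. w (p n) * (v \<bullet> v - (v \<bullet> N (p n))\<^sup>2) < 1 / real (Suc n)"
    using stoch_complete_exp_height_seq[OF sc v(2) le] unfolding w_def[abs_def] by blast
  have wc: "continuous_on UNIV w" unfolding w_def[abs_def] using continuous_F by (intro continuous_intros)
  have wb: "bdd_above (range w)" by (rule bdd_aboveI[of _ 1]) (auto simp: w_def le)
  have "\<not> (\<exists>l. \<forall>y. w y \<le> w l)" using no_max by (simp add: w_def)
  with P have "divergent_seq p" by (rule maximizing_seq_divergent[OF wc wb])
  moreover have bd: "(N (p n) \<bullet> e3)\<^sup>2 * (v \<bullet> v) \<le> v \<bullet> v - (v \<bullet> N (p n))\<^sup>2" for n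
    using normal_e3_bound[OF N_unit v(2,1)] by (simp add: inner_commute)
  have "(\<lambda>n. v \<bullet> v - (v \<bullet> N (p n))\<^sup>2) \<longlonglongrightarrow> 0"
  proof (rule tendsto_zero_if_product_bound[OF maximizing_seq_tendsto[OF P] _ _ bound])
    show "w y \<le> Sup (range w)" for y using wb by (simp add: cSup_upper)
    have "w undefined \<le> Sup (range w)" using wb by (simp add: cSup_upper)
    moreover have "0 < w undefined" by (simp add: w_def)
    ultimately show "0 < Sup (range w)" by linarith
    show "0 \<le> v \<bullet> v - (v \<bullet> N (p n))\<^sup>2" for n
      using bd[of n] by (rule order_trans[rotated]) simp
  qed
  then have "(\<lambda>n. N (p n) \<bullet> e3) \<longlonglongrightarrow> 0"
    by (rule tendsto_zero_if_sq_bound) (use v(1) bd in auto)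
  ultimately show ?thesis using that by blast
qed

end

theorem theoremD:
  fixes A :: "((real \<times> real) set \<times> (real \<times> real \<Rightarrow> 'm::{t2_space, second_countable_topology})) set"
    and F :: "'m \<Rightarrow> real^3" and N :: "'m \<Rightarrow> real^3"
    and \<phi> :: "real \<Rightarrow> real" and v :: "real^3"
  assumes "smooth_real \<phi>"
    and "surface_atlas A"
    and "connected (UNIV :: 'm set)"
    and "immersion A F"
    and "unit_normal A F N"
    and "phi_e3_minimal A F N \<phi>"
    and "phi_stoch_complete A F \<phi>"
    and "v \<noteq> 0" and "v \<bullet> e3 = 0"
    and "\<forall>p. F p \<bullet> v \<le> 0"
  shows "(\<exists>c. range F = {y. y \<bullet> v = c})
    \<or> (\<not> (\<exists>c. range F = {y. y \<bullet> v = c})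
        \<and> (\<exists>p :: nat \<Rightarrow> 'm. divergent_seq p \<and> (\<lambda>n. N (p n) \<bullet> e3) \<longlonglongrightarrow> 0))"
proof -
  interpret phi_minimal_surface A F N \<phi>
    using assms(1,2,4-6) by unfold_locales
  obtain p where "divergent_seq p" "(\<lambda>n. N (p n) \<bullet> e3) \<longlonglongrightarrow> 0"
  proof (cases "\<exists>l. \<forall>p. F p \<bullet> v \<le> F l \<bullet> v")
    case True
    then obtain l where "\<And>p. F p \<bullet> v \<le> F l \<bullet> v" by blast
    with horizontal_height_max_imp_const[OF assms(3,9)] have "\<And>p. F p \<bullet> v = F l \<bullet> v" by blast
    with planar_case[OF assms(8,9)] that show ?thesis by blast
  next
    case False
    with nonplanar_case[OF assms(7-9)] assms(10) that show ?thesis by blast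
  qed
  then show ?thesis by blast
qed

end
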